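(* Let $n\ge 2$. (i) There exists a maximally antipodal subset of $\mathcal F_{2,2n-2}$ homeomorphic to the $2$-sphere $S^2$. (ii) There exists a maximally antipodal subset of $\mathrm{Iso}_2(\mathbb R^{2n})$ homeomorphic to $S^{2n-3}$.
   Context: $\mathcal F_{2,2n-2}$ is the manifold of pairs $(V,W)$ of linear subspaces of $\mathbb R^{2n}$ with $\dim V=2$, $\dim W=2n-2$, $V\subset W$ (a flag manifold of $\mathrm{SL}(2n,\mathbb R)$); two such pairs $(V,W),(V',W')$ are antipodal if $V\oplus W'=\mathbb R^{2n}$ and $V'\oplus W=\mathbb R^{2n}$. $\mathrm{Iso}_2(\mathbb R^{2n})$ is the manifold of $2$-planes in $\mathbb R^{2n}$ isotropic for a fixed symplectic form $\omega$; two isotropic planes $V,W$ are antipodal if $V\oplus W^{\perp_\omega}=\mathbb R^{2n}$. A subset $\Lambda$ of a flag manifold is antipodal if any two distinct points of $\Lambda$ are antipodal, and maximally antipodal if it is antipodal and every point of the flag manifold is non-antipodal to at least one point of $\Lambda$. *)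

theory Defs
  imports "HOL-Analysis.Analysis"
begin

text \<open>Ambient space: real^'n with CARD('n) = 2n. Linear subspaces are sets of vectors.\<close>

definition dsum_univ :: "'a::real_vector set \<Rightarrow> 'a set \<Rightarrow> bool" where
  "dsum_univ A B \<longleftrightarrow> A \<inter> B = {0} \<and> {a + b | a b. a \<in> A \<and> b \<in> B} = UNIV"

definition flag22 :: "((real^'n) set \<times> (real^'n) set) set" where
  "flag22 = {(V, W). subspace V \<and> subspace W \<and> dim V = 2 \<and> dim W = CARD('n) - 2 \<and> V \<subseteq> W}"

definition flag_antipodal :: "(real^'n) set \<times> (real^'n) set \<Rightarrow> (real^'n) set \<times> (real^'n) set \<Rightarrow> bool" where
  "flag_antipodal p q \<longleftrightarrow> dsum_univ (fst p) (snd q) \<and> dsum_univ (fst q) (snd p)"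

definition symplectic_form :: "('a::real_vector \<Rightarrow> 'a \<Rightarrow> real) \<Rightarrow> bool" where
  "symplectic_form \<omega> \<longleftrightarrow> bilinear \<omega> \<and> (\<forall>x. \<omega> x x = 0) \<and> (\<forall>x. (\<forall>y. \<omega> x y = 0) \<longrightarrow> x = 0)"

definition symp_orth :: "('a \<Rightarrow> 'a \<Rightarrow> real) \<Rightarrow> 'a set \<Rightarrow> 'a set" where
  "symp_orth \<omega> W = {x. \<forall>w\<in>W. \<omega> x w = 0}"

definition iso2 :: "(real^'n \<Rightarrow> real^'n \<Rightarrow> real) \<Rightarrow> (real^'n) set set" where
  "iso2 \<omega> = {V. subspace V \<and> dim V = 2 \<and> (\<forall>x\<in>V. \<forall>y\<in>V. \<omega> x y = 0)}"

definition iso_antipodal :: "('a::real_vector \<Rightarrow> 'a \<Rightarrow> real) \<Rightarrow> 'a set \<Rightarrow> 'a set \<Rightarrow> bool" where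
  "iso_antipodal \<omega> V W \<longleftrightarrow> dsum_univ V (symp_orth \<omega> W)"

definition antipodal_set :: "('x \<Rightarrow> 'x \<Rightarrow> bool) \<Rightarrow> 'x set \<Rightarrow> bool" where
  "antipodal_set ap L \<longleftrightarrow> (\<forall>x\<in>L. \<forall>y\<in>L. x \<noteq> y \<longrightarrow> ap x y)"

definition max_antipodal :: "'x set \<Rightarrow> ('x \<Rightarrow> 'x \<Rightarrow> bool) \<Rightarrow> 'x set \<Rightarrow> bool" where
  "max_antipodal X ap L \<longleftrightarrow> L \<subseteq> X \<and> antipodal_set ap L \<and> (\<forall>x\<in>X. \<exists>y\<in>L. \<not> ap x y)"

text \<open>Topology: a linear subspace V is identified with the matrix of the orthogonal projection
  onto V (the standard embedding of the Grassmannian); flags with the pair of such matrices.\<close>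
definition proj_mat :: "(real^'n) set \<Rightarrow> real^'n^'n" where
  "proj_mat V = matrix (closest_point V)"

definition flag_emb :: "(real^'n) set \<times> (real^'n) set \<Rightarrow> (real^'n^'n) \<times> (real^'n^'n)" where
  "flag_emb p = (proj_mat (fst p), proj_mat (snd p))"

end

theory Submission
  imports Defs
begin

(*
  (i) On R^4 the symmetric matrices pauli u, for u on the unit sphere S^2, are involutions
  with pauli u pauli v + pauli v pauli u = 2 <u, v>, so their fixed planes l(u) are
  pairwise transverse, and the Hopf map shows that every nonzero vector of R^4 lies in
  some l(u). Placing R^4 on four coordinates of R^2n, the flags (l(u), l(u) + ker), with
  ker the complementary coordinate space, are therefore pairwise antipodal, and every flag
  (V, W) fails to be antipodal to one of them because W, of codimension 2, meets R^4.

  (ii) Choose e, f with omega(e, f) = 1 and a complex structure K on C = {e, f}^omega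
  compatible with omega, so that g(u, v) = - omega(u, K v) is an inner product on C. For u on
  the g-unit sphere of C the planes span {e + u, f + K u} are isotropic, and two of them are
  antipodal because their matrix of omega-pairings has determinant
  omega(u, v)^2 + (1 - g(u, v))^2. An isotropic plane X is not antipodal to one of them as
  soon as some nonzero x = s e + t f + q in X has g(q, q) = s^2 + t^2, or g(q, q) > s^2 + t^2
  and dim C >= 3. That the quadratic form g(q, q) - s^2 - t^2 on X has such a vector
  follows by comparing Gram determinants: isotropy of X turns the Gram determinant of
  (s, t) into omega(q1, q2)^2, which Bessel's inequality for q2, K q2 bounds by the Gram
  determinant of g, with equality when dim C = 2.
*)

section \<open>Planes, direct sums and orthogonal projections\<close>

lemma span_pair: "span {a, b} = {x. \<exists>\<alpha> \<beta>. x = \<alpha> *\<^sub>R a + \<beta> *\<^sub>R b}"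
proof -
  have "span {a, b} = {x. \<exists>k. x - k *\<^sub>R a \<in> span {b}}" by (simp add: span_insert)
  also have "\<dots> = {x. \<exists>\<alpha> \<beta>. x = \<alpha> *\<^sub>R a + \<beta> *\<^sub>R b}"
  proof (auto simp: span_singleton)
    fix x k c assume "x - k *\<^sub>R a = c *\<^sub>R b"
    then show "\<exists>\<alpha> \<beta>. x = \<alpha> *\<^sub>R a + \<beta> *\<^sub>R b" by (metis diff_eq_eq add.commute)
  next
    fix \<alpha> \<beta> show "\<exists>k. \<alpha> *\<^sub>R a + \<beta> *\<^sub>R b - k *\<^sub>R a \<in> range (\<lambda>k. k *\<^sub>R b)"
      by (rule exI[of _ \<alpha>]) auto
  qed
  finally show ?thesis .
qed

lemma independent_pairI:
  fixes a b :: "'a::real_vector"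
  assumes "\<And>\<alpha> \<beta>. \<alpha> *\<^sub>R a + \<beta> *\<^sub>R b = 0 \<Longrightarrow> \<alpha> = 0 \<and> \<beta> = 0"
  shows "independent {a, b}" "a \<noteq> b"
proof -
  show "a \<noteq> b" using assms[of 1 "-1"] by auto
  have "b \<noteq> 0" using assms[of 0 1] by auto
  moreover have "a \<notin> span {b}"
  proof
    assume "a \<in> span {b}"
    then obtain k where "1 *\<^sub>R a + (- k) *\<^sub>R b = 0" by (auto simp: span_singleton)
    then show False using assms by fastforce
  qed
  ultimately show "independent {a, b}" by (simp add: independent_insert)
qed

lemma independent_pairD:
  fixes a b :: "'a::real_vector"
  assumes "independent {a, b}" "a \<noteq> b" "\<alpha> *\<^sub>R a + \<beta> *\<^sub>R b = 0"
  shows "\<alpha> = 0 \<and> \<beta> = 0"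
proof (cases "\<alpha> = 0")
  case True
  then show ?thesis using assms by (auto simp: independent_insert)
next
  case False
  have h: "\<alpha> *\<^sub>R a = - (\<beta> *\<^sub>R b)" using assms(3) by (simp add: eq_neg_iff_add_eq_0)
  have "a = inverse \<alpha> *\<^sub>R (\<alpha> *\<^sub>R a)" using False by simp
  also have "\<dots> = (- \<beta> / \<alpha>) *\<^sub>R b" unfolding h by (simp add: divide_inverse mult.commute)
  finally have "a \<in> span {b}" by (metis span_base span_scale singletonI)
  then show ?thesis using assms(1,2) by (simp add: independent_insert)
qed

lemma dim_span_pair:
  fixes a b :: "'a::euclidean_space"
  assumes "\<And>\<alpha> \<beta>. \<alpha> *\<^sub>R a + \<beta> *\<^sub>R b = 0 \<Longrightarrow> \<alpha> = 0 \<and> \<beta> = 0"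
  shows "dim (span {a, b}) = 2"
proof -
  have "independent {a, b}" "a \<noteq> b" using independent_pairI[of a b] assms by blast+
  then show ?thesis by (simp add: dim_eq_card_independent)
qed

lemma dsum_univ_dim:
  fixes A B :: "'a::euclidean_space set"
  assumes "subspace A" "subspace B" "dsum_univ A B"
  shows "dim A + dim B = DIM('a)"
  using dim_sums_Int[OF assms(1,2)] assms(3) by (simp add: dsum_univ_def)

lemma dsum_univI:
  fixes A B :: "'a::euclidean_space set"
  assumes "subspace A" "subspace B" "A \<inter> B = {0}" "dim A + dim B = DIM('a)"
  shows "dsum_univ A B"
proof -
  let ?S = "{a + b |a b. a \<in> A \<and> b \<in> B}"
  have "dim ?S = DIM('a)" using dim_sums_Int[OF assms(1,2)] assms(3,4) by simp
  then have "span ?S = UNIV" by (simp add: dim_eq_full)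
  moreover have "span ?S = ?S" using subspace_sums[OF assms(1,2)] by simp
  ultimately show ?thesis using assms(3) by (simp add: dsum_univ_def)
qed

lemma closest_point_subspace_eqI:
  fixes V :: "'a::euclidean_space set"
  assumes V: "subspace V" and p: "p \<in> V" and orth: "\<And>z. z \<in> V \<Longrightarrow> inner (x - p) z = 0"
  shows "closest_point V x = p"
proof -
  have "dist x p \<le> dist x z" if z: "z \<in> V" for z
  proof -
    have "(norm (x - z))\<^sup>2 = (norm (x - p))\<^sup>2 + (norm (p - z))\<^sup>2"
      using orth[OF subspace_diff[OF V p z]] norm_add_Pythagorean[of "x - p" "p - z"]
      by (simp add: orthogonal_def)
    then show ?thesis by (simp add: dist_norm power2_le_imp_le)
  qed
  then show ?thesis
    using closest_point_unique[OF subspace_imp_convex[OF V] closed_subspace[OF V] p] by auto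
qed

lemma closest_point_subspace_orthogonal:
  fixes V :: "'a::euclidean_space set"
  assumes V: "subspace V" and z: "z \<in> V"
  shows "inner (x - closest_point V x) z = 0"
proof -
  let ?p = "closest_point V x"
  have p: "?p \<in> V" using closest_point_in_set[OF closed_subspace[OF V]] subspace_0[OF V] by blast
  have "inner (x - ?p) (y - ?p) \<le> 0" if "y \<in> V" for y
    using closest_point_dot[OF subspace_imp_convex[OF V] closed_subspace[OF V] that] .
  from this[of "?p + z"] this[of "?p - z"] show ?thesis
    using V p z by (simp add: subspace_add subspace_diff inner_minus_right)
qed

lemma linear_closest_point_subspace:
  fixes V :: "'a::euclidean_space set"
  assumes V: "subspace V"
  shows "linear (closest_point V)"
proof -
  have p: "closest_point V x \<in> V" for x
    using closest_point_in_set[OF closed_subspace[OF V]] subspace_0[OF V] by blast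
  note orth = closest_point_subspace_orthogonal[OF V]
  show ?thesis
  proof (rule linearI)
    show "closest_point V (x + y) = closest_point V x + closest_point V y" for x y
      by (rule closest_point_subspace_eqI[OF V subspace_add[OF V p p]])
        (metis (no_types, lifting) add_diff_add inner_add_left orth add.right_neutral)
    show "closest_point V (c *\<^sub>R x) = c *\<^sub>R closest_point V x" for c x
      by (rule closest_point_subspace_eqI[OF V subspace_scale[OF V p]])
        (metis inner_scaleR_left mult_zero_right orth scaleR_right_diff_distrib)
  qed
qed

lemma proj_mat_inj:
  fixes V W :: "(real^'n) set"
  assumes "subspace V" "subspace W" "proj_mat V = proj_mat W"
  shows "V = W"
proof -
  have "closest_point V = closest_point W"
    using assms matrix_vector_mul(2)[OF linear_closest_point_subspace]
    unfolding proj_mat_def by metis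
  moreover have "U = {x. closest_point U x = x}" if "subspace U" for U :: "(real^'n) set"
    using closest_point_refl[OF closed_subspace[OF that]] subspace_0[OF that] by auto
  ultimately show ?thesis using assms(1,2) by metis
qed

lemma common_zero_of_two_functionals:
  fixes V :: "'a::euclidean_space set" and \<phi> \<psi> :: "'a \<Rightarrow> real"
  assumes V: "subspace V" "dim V \<ge> 3" and lin: "linear \<phi>" "linear \<psi>"
  shows "\<exists>w\<in>V. w \<noteq> 0 \<and> \<phi> w = 0 \<and> \<psi> w = 0"
proof (rule ccontr)
  assume none: "\<not> ?thesis"
  define L where "L w = (\<phi> w, \<psi> w)" for w
  have "linear L"
    using lin by (intro linearI) (simp_all add: L_def linear_add linear_scale)
  moreover have "inj_on L (span V)"
  proof (rule inj_onI)
    fix w1 w2 assume w: "w1 \<in> span V" "w2 \<in> span V" "L w1 = L w2"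
    then have "w1 - w2 \<in> V" using V(1) subspace_diff by (metis span_eq_iff)
    moreover have "\<phi> (w1 - w2) = 0" "\<psi> (w1 - w2) = 0"
      using w(3) lin by (simp_all add: L_def linear_diff)
    ultimately show "w1 = w2" using none by auto
  qed
  ultimately have "dim (L ` V) = dim V" by (rule dim_image_eq)
  moreover have "dim (L ` V) \<le> 2" using dim_subset_UNIV[of "L ` V"] by simp
  ultimately show False using V(2) by simp
qed

definition gram_det :: "'a::real_inner \<Rightarrow> 'a \<Rightarrow> real" where
  "gram_det a b = inner a a * inner b b - (inner a b)\<^sup>2"

definition plane_proj :: "'a::real_inner \<Rightarrow> 'a \<Rightarrow> 'a \<Rightarrow> 'a" where
  "plane_proj a b x = ((inner x a * inner b b - inner x b * inner a b) / gram_det a b) *\<^sub>R a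
     + ((inner x b * inner a a - inner x a * inner a b) / gram_det a b) *\<^sub>R b"

lemma gram_det_pos:
  fixes a b :: "'a::real_inner"
  assumes "\<And>\<alpha> \<beta>. \<alpha> *\<^sub>R a + \<beta> *\<^sub>R b = 0 \<Longrightarrow> \<alpha> = 0 \<and> \<beta> = 0"
  shows "gram_det a b > 0"
proof -
  have aa: "inner a a > 0" using assms[of 1 0] by auto
  define z where "z = b - (inner a b / inner a a) *\<^sub>R a"
  have "z \<noteq> 0" using assms[of "- (inner a b / inner a a)" 1] by (auto simp: z_def)
  then have "inner z z > 0" by simp
  moreover have "inner a a * inner z z = gram_det a b"
    using aa unfolding z_def gram_det_def
    by (simp add: inner_diff_left inner_diff_right inner_commute field_simps power2_eq_square)
  ultimately show ?thesis using aa by (metis mult_pos_pos)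
qed

lemma plane_proj_orthogonal:
  fixes a b :: "'a::real_inner"
  assumes "gram_det a b \<noteq> 0"
  shows "inner (x - plane_proj a b x) a = 0" "inner (x - plane_proj a b x) b = 0"
proof -
  define D where "D = gram_det a b"
  have D: "D = inner a a * inner b b - (inner a b)\<^sup>2" by (simp add: D_def gram_det_def)
  have "inner (plane_proj a b x) a = ((inner x a * inner b b - inner x b * inner a b) * inner a a
     + (inner x b * inner a a - inner x a * inner a b) * inner a b) / D"
    unfolding plane_proj_def D_def[symmetric]
    by (simp add: inner_add_left inner_add_right add_divide_distrib inner_commute mult.commute)
  also have "\<dots> = inner x a * D / D" unfolding D by (simp add: algebra_simps power2_eq_square)
  finally show "inner (x - plane_proj a b x) a = 0"
    using assms by (simp add: D_def inner_diff_left)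
  have "inner (plane_proj a b x) b = ((inner x a * inner b b - inner x b * inner a b) * inner a b
     + (inner x b * inner a a - inner x a * inner a b) * inner b b) / D"
    unfolding plane_proj_def D_def[symmetric]
    by (simp add: inner_add_left inner_add_right add_divide_distrib inner_commute mult.commute)
  also have "\<dots> = inner x b * D / D" unfolding D by (simp add: algebra_simps power2_eq_square)
  finally show "inner (x - plane_proj a b x) b = 0"
    using assms by (simp add: D_def inner_diff_left)
qed

lemma closest_point_span_pair:
  fixes a b x :: "'a::euclidean_space"
  assumes "\<And>\<alpha> \<beta>. \<alpha> *\<^sub>R a + \<beta> *\<^sub>R b = 0 \<Longrightarrow> \<alpha> = 0 \<and> \<beta> = 0"
  shows "closest_point (span {a, b}) x = plane_proj a b x"
proof (rule closest_point_subspace_eqI)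
  show "plane_proj a b x \<in> span {a, b}" unfolding span_pair plane_proj_def by blast
  have "gram_det a b \<noteq> 0" using gram_det_pos[of a b] assms by fastforce
  fix z assume "z \<in> span {a, b}"
  then obtain \<alpha> \<beta> where "z = \<alpha> *\<^sub>R a + \<beta> *\<^sub>R b" by (auto simp: span_pair)
  then show "inner (x - plane_proj a b x) z = 0"
    using plane_proj_orthogonal[of a b x] \<open>gram_det a b \<noteq> 0\<close> by (simp add: inner_add_right)
qed simp

lemma continuous_on_matrix:
  fixes h :: "'b::topological_space \<Rightarrow> real^'n \<Rightarrow> real^'m"
  assumes "\<And>x. continuous_on T (\<lambda>w. h w x)"
  shows "continuous_on T (\<lambda>w. matrix (h w))"
  unfolding matrix_def by (intro continuous_intros assms)

lemma continuous_on_proj_mat_span_pair: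
  fixes a b :: "'b::topological_space \<Rightarrow> real^'n"
  assumes "continuous_on T a" "continuous_on T b"
    and indep: "\<And>w \<alpha> \<beta>. w \<in> T \<Longrightarrow> \<alpha> *\<^sub>R a w + \<beta> *\<^sub>R b w = 0 \<Longrightarrow> \<alpha> = 0 \<and> \<beta> = 0"
  shows "continuous_on T (\<lambda>w. proj_mat (span {a w, b w}))"
proof (rule continuous_on_eq)
  have "gram_det (a w) (b w) \<noteq> 0" if "w \<in> T" for w
    using gram_det_pos[of "a w" "b w"] indep[OF that] by fastforce
  then show "continuous_on T (\<lambda>w. matrix (plane_proj (a w) (b w)))"
    unfolding plane_proj_def gram_det_def
    by (intro continuous_on_matrix continuous_intros assms(1,2)) (auto simp: gram_det_def)
  show "matrix (plane_proj (a w) (b w)) = proj_mat (span {a w, b w})" if "w \<in> T" for w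
    using closest_point_span_pair[of "a w" "b w"] indep[OF that] unfolding proj_mat_def by metis
qed

section \<open>A 2-sphere of pairwise antipodal flags\<close>

text \<open>sigma1, sigma2, sigma3 are symmetric, square to the identity and pairwise
  anticommute (a real Clifford module structure on R^4); J4 commutes with all of them.\<close>
definition sigma1 :: "real^4 \<Rightarrow> real^4" where
  "sigma1 x = (\<chi> k. if k = 1 then x$1 else if k = 2 then x$2 else if k = 3 then - x$3 else - x$4)"
definition sigma2 :: "real^4 \<Rightarrow> real^4" where
  "sigma2 x = (\<chi> k. if k = 1 then x$3 else if k = 2 then x$4 else if k = 3 then x$1 else x$2)"
definition sigma3 :: "real^4 \<Rightarrow> real^4" where
  "sigma3 x = (\<chi> k. if k = 1 then x$4 else if k = 2 then - x$3 else if k = 3 then - x$2 else x$1)"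
definition J4 :: "real^4 \<Rightarrow> real^4" where
  "J4 x = (\<chi> k. if k = 1 then - x$2 else if k = 2 then x$1 else if k = 3 then - x$4 else x$3)"

definition pauli :: "real^3 \<Rightarrow> real^4 \<Rightarrow> real^4" where
  "pauli u x = u$1 *\<^sub>R sigma1 x + u$2 *\<^sub>R sigma2 x + u$3 *\<^sub>R sigma3 x"

text \<open>The Hopf map: hopf x is the point u with pauli u x = |x|^2 x.\<close>
definition hopf :: "real^4 \<Rightarrow> real^3" where
  "hopf x = (\<chi> k. if k = 1 then x$1 * x$1 + x$2 * x$2 - x$3 * x$3 - x$4 * x$4
     else if k = 2 then 2 * (x$1 * x$3 + x$2 * x$4) else 2 * (x$1 * x$4 - x$2 * x$3))"

definition pauli_fix :: "real^3 \<Rightarrow> (real^4) set" where "pauli_fix u = {x. pauli u x = x}"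

definition pauli_proj :: "real^3 \<Rightarrow> real^4 \<Rightarrow> real^4" where
  "pauli_proj u x = (1/2) *\<^sub>R (x + pauli u x)"

lemma J4_nth: "J4 x $ 1 = - x$2" "J4 x $ 2 = x$1" "J4 x $ 3 = - x$4" "J4 x $ 4 = x$3"
  by (simp_all add: J4_def)

lemma pauli_nth:
  "pauli u x $ 1 = u$1 * x$1 + u$2 * x$3 + u$3 * x$4"
  "pauli u x $ 2 = u$1 * x$2 + u$2 * x$4 - u$3 * x$3"
  "pauli u x $ 3 = - u$1 * x$3 + u$2 * x$1 - u$3 * x$2"
  "pauli u x $ 4 = - u$1 * x$4 + u$2 * x$2 + u$3 * x$1"
  by (simp_all add: pauli_def sigma1_def sigma2_def sigma3_def)

lemma hopf_nth: "hopf x $ 1 = x$1 * x$1 + x$2 * x$2 - x$3 * x$3 - x$4 * x$4"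
  "hopf x $ 2 = 2 * (x$1 * x$3 + x$2 * x$4)" "hopf x $ 3 = 2 * (x$1 * x$4 - x$2 * x$3)"
  by (simp_all add: hopf_def)

lemma inner_vec4: "inner (x::real^4) y = x$1 * y$1 + x$2 * y$2 + x$3 * y$3 + x$4 * y$4"
  by (simp add: inner_vec_def sum_4)

lemma inner_vec3: "inner (x::real^3) y = x$1 * y$1 + x$2 * y$2 + x$3 * y$3"
  by (simp add: inner_vec_def sum_3)

lemma vec4_eq_iff: "(x::real^4) = y \<longleftrightarrow> x$1 = y$1 \<and> x$2 = y$2 \<and> x$3 = y$3 \<and> x$4 = y$4"
  by (simp add: vec_eq_iff forall_4)

lemma pauli_anticommute: "pauli u (pauli v x) + pauli v (pauli u x) = (2 * inner u v) *\<^sub>R x"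
  by (simp add: vec4_eq_iff pauli_nth inner_vec3 algebra_simps)

lemma pauli_square: "pauli u (pauli u x) = inner u u *\<^sub>R x"
  by (simp add: vec4_eq_iff pauli_nth inner_vec3 algebra_simps)

lemma pauli_symmetric: "inner (pauli u x) y = inner x (pauli u y)"
  by (simp add: inner_vec4 pauli_nth algebra_simps)

lemma pauli_J4: "pauli u (J4 x) = J4 (pauli u x)"
  by (simp add: vec4_eq_iff pauli_nth J4_nth algebra_simps)

lemma inner_J4: "inner x (J4 x) = 0" "inner (J4 x) (J4 x) = inner x x"
  by (simp_all add: inner_vec4 J4_nth algebra_simps)

lemma pauli_minus: "pauli (- u) x = - pauli u x"
  by (simp add: pauli_def algebra_simps)

lemma pauli_scale: "pauli (c *\<^sub>R u) x = c *\<^sub>R pauli u x"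
  by (simp add: pauli_def algebra_simps)

lemma linear_pauli: "linear (pauli u)"
  by (rule linearI) (simp_all add: vec4_eq_iff pauli_nth algebra_simps)

lemma pauli_hopf: "pauli (hopf x) x = inner x x *\<^sub>R x"
  by (simp add: vec4_eq_iff pauli_nth hopf_nth inner_vec4 algebra_simps)

lemma inner_hopf: "inner (hopf x) (hopf x) = inner x x * inner x x"
  by (simp add: inner_vec3 hopf_nth inner_vec4 algebra_simps)

lemma subspace_pauli_fix: "subspace (pauli_fix u)"
  unfolding subspace_def pauli_fix_def
  by (simp add: linear_add[OF linear_pauli] linear_scale[OF linear_pauli] linear_0[OF linear_pauli])

lemma pauli_involution: "norm u = 1 \<Longrightarrow> pauli u (pauli u x) = x"
  by (simp add: pauli_square norm_eq_1)

lemma pauli_proj_in: "norm u = 1 \<Longrightarrow> pauli_proj u x \<in> pauli_fix u"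
  by (simp add: pauli_fix_def pauli_proj_def linear_add[OF linear_pauli]
      linear_scale[OF linear_pauli] pauli_involution)

lemma pauli_proj_orthogonal: "z \<in> pauli_fix u \<Longrightarrow> inner (x - pauli_proj u x) z = 0"
  using pauli_symmetric[of u x z]
  by (simp add: pauli_proj_def pauli_fix_def inner_diff_left inner_add_left algebra_simps)

lemma pauli_fix_disjoint:
  assumes "norm u = 1" "norm v = 1" "u \<noteq> v"
  shows "pauli_fix u \<inter> pauli_fix v = {0}"
proof -
  have "inner u v \<noteq> 1"
  proof
    assume "inner u v = 1"
    then have "inner (u - v) (u - v) = 0" using assms(1,2)
      by (simp add: inner_diff_left inner_diff_right inner_commute norm_eq_1)
    then show False using assms(3) by simp
  qed
  moreover have "(2 - 2 * inner u v) *\<^sub>R x = 0" if "x \<in> pauli_fix u" "x \<in> pauli_fix v" for x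
    using pauli_anticommute[of u v x] that by (simp add: pauli_fix_def algebra_simps scaleR_2)
  ultimately show ?thesis using subspace_0[OF subspace_pauli_fix] by auto
qed

lemma dim_pauli_fix_ge:
  assumes "norm u = 1" shows "dim (pauli_fix u) \<ge> 2"
proof -
  obtain w where w: "w \<in> pauli_fix u" "w \<noteq> 0"
  proof (cases "u$1 = -1")
    case True
    then have "pauli_proj u (axis 3 1) $ 3 = 1" by (simp add: pauli_proj_def pauli_nth axis_def)
    then show ?thesis using that[of "pauli_proj u (axis 3 1)"] pauli_proj_in[OF assms] by fastforce
  next
    case False
    then have "pauli_proj u (axis 1 1) $ 1 \<noteq> 0" by (simp add: pauli_proj_def pauli_nth axis_def)
    then show ?thesis using that[of "pauli_proj u (axis 1 1)"] pauli_proj_in[OF assms] by fastforce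
  qed
  have Jw: "J4 w \<in> pauli_fix u" using w(1) by (simp add: pauli_fix_def pauli_J4)
  have indep: "\<alpha> = 0 \<and> \<beta> = 0" if "\<alpha> *\<^sub>R w + \<beta> *\<^sub>R J4 w = 0" for \<alpha> \<beta>
  proof -
    have "inner (\<alpha> *\<^sub>R w + \<beta> *\<^sub>R J4 w) w = 0" "inner (\<alpha> *\<^sub>R w + \<beta> *\<^sub>R J4 w) (J4 w) = 0"
      using that by simp_all
    moreover have "inner (J4 w) w = 0" using inner_J4(1)[of w] by (simp add: inner_commute)
    ultimately show ?thesis using w(2) inner_J4[of w] by (simp add: inner_add_left)
  qed
  note independent_pairI[of w "J4 w", OF indep]
  moreover have "{w, J4 w} \<subseteq> pauli_fix u" using w(1) Jw by auto
  ultimately show ?thesis using independent_card_le_dim[of "{w, J4 w}" "pauli_fix u"] by simp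
qed

text \<open>The fixed spaces of pauli u and pauli (- u) = - pauli u are complementary.\<close>
lemma dim_pauli_fix:
  assumes u: "norm u = 1" shows "dim (pauli_fix u) = 2"
proof -
  have nu: "norm (- u) = 1" and "u \<noteq> - u" using u by (auto simp: eq_neg_iff_add_eq_0 scaleR_2[symmetric])
  have "dsum_univ (pauli_fix u) (pauli_fix (- u))"
    unfolding dsum_univ_def
  proof
    show "pauli_fix u \<inter> pauli_fix (- u) = {0}" by (rule pauli_fix_disjoint[OF u nu \<open>u \<noteq> - u\<close>])
    have "x = pauli_proj u x + pauli_proj (- u) x" for x
      by (simp add: pauli_proj_def pauli_minus algebra_simps scaleR_2[symmetric])
    then show "{a + b |a b. a \<in> pauli_fix u \<and> b \<in> pauli_fix (- u)} = UNIV"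
      using pauli_proj_in[OF u] pauli_proj_in[OF nu] by blast
  qed
  then have "dim (pauli_fix u) + dim (pauli_fix (- u)) = 4"
    using dsum_univ_dim[OF subspace_pauli_fix subspace_pauli_fix] by simp
  then show ?thesis using dim_pauli_fix_ge[OF u] dim_pauli_fix_ge[OF nu] by linarith
qed

lemma pauli_fix_dsum_univ:
  assumes "norm u = 1" "norm v = 1" "u \<noteq> v"
  shows "{x + y |x y. x \<in> pauli_fix u \<and> y \<in> pauli_fix v} = UNIV"
  using dsum_univI[OF subspace_pauli_fix subspace_pauli_fix pauli_fix_disjoint[OF assms]]
    dim_pauli_fix assms by (simp add: dsum_univ_def)

lemma in_pauli_fix_hopf:
  assumes "x \<noteq> 0"
  obtains u where "norm u = 1" "x \<in> pauli_fix u"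
proof -
  define u where "u = (1 / inner x x) *\<^sub>R hopf x"
  have "inner x x > 0" using assms by simp
  then have "pauli u x = x" "inner u u = 1"
    by (simp_all add: u_def pauli_scale pauli_hopf inner_hopf)
  then show ?thesis using that by (simp add: pauli_fix_def norm_eq_1)
qed

locale coord4 =
  fixes idx :: "4 \<Rightarrow> 'n::finite"
  assumes inj_idx: "inj idx"
begin

definition embed :: "real^4 \<Rightarrow> real^'n" where
  "embed x = (\<chi> j. if j \<in> range idx then x $ (inv idx j) else 0)"

definition restrict :: "real^'n \<Rightarrow> real^4" where
  "restrict y = (\<chi> k. y $ idx k)"

definition flag_plane :: "real^3 \<Rightarrow> (real^'n) set" where
  "flag_plane u = embed ` pauli_fix u"

definition flag_hyperplane :: "real^3 \<Rightarrow> (real^'n) set" where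
  "flag_hyperplane u = {y. restrict y \<in> pauli_fix u}"

definition pauli_flag :: "real^3 \<Rightarrow> (real^'n) set \<times> (real^'n) set" where
  "pauli_flag u = (flag_plane u, flag_hyperplane u)"

lemma embed_nth[simp]: "embed x $ idx k = x $ k"
  using inj_idx by (simp add: embed_def)
lemma restrict_nth[simp]: "restrict y $ k = y $ idx k" by (simp add: restrict_def)
lemma restrict_embed[simp]: "restrict (embed x) = x" by (simp add: vec_eq_iff)
lemma embed_add[simp]: "embed (x + y) = embed x + embed y" by (simp add: embed_def vec_eq_iff)
lemma embed_scale[simp]: "embed (c *\<^sub>R x) = c *\<^sub>R embed x" by (simp add: embed_def vec_eq_iff)
lemma embed_diff[simp]: "embed (x - y) = embed x - embed y" by (simp add: embed_def vec_eq_iff)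
lemma embed_0[simp]: "embed 0 = 0" by (simp add: embed_def vec_eq_iff)
lemma restrict_add[simp]: "restrict (x + y) = restrict x + restrict y" by (simp add: vec_eq_iff)
lemma restrict_scale[simp]: "restrict (c *\<^sub>R x) = c *\<^sub>R restrict x" by (simp add: vec_eq_iff)
lemma restrict_0[simp]: "restrict 0 = 0" by (simp add: vec_eq_iff)
lemma restrict_diff[simp]: "restrict (x - y) = restrict x - restrict y" by (simp add: vec_eq_iff)
lemma linear_embed: "linear embed" by (rule linearI) simp_all
lemma linear_restrict: "linear restrict" by (rule linearI) simp_all
lemma embed_inj: "embed x = embed z \<Longrightarrow> x = z" by (metis restrict_embed)

lemma card_ge_4: "CARD('n) \<ge> 4"
  using card_inj_on_le[of idx UNIV UNIV] inj_idx by simp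

lemma inner_embed: "inner (embed x) y = inner x (restrict y)"
proof -
  have "inner (embed x) y = (\<Sum>j\<in>UNIV. embed x $ j * y $ j)" by (simp add: inner_vec_def)
  also have "\<dots> = (\<Sum>j\<in>range idx. embed x $ j * y $ j)"
    by (rule sum.mono_neutral_right) (auto simp: embed_def)
  also have "\<dots> = inner x (restrict y)"
    using sum.reindex[OF inj_idx, of "\<lambda>j. embed x $ j * y $ j"] by (simp add: inner_vec_def)
  finally show ?thesis .
qed

lemma dim_embed_image: "dim (embed ` S) = dim S"
  by (rule dim_image_eq[OF linear_embed]) (auto intro: inj_onI embed_inj)

lemma subspace_flag_plane: "subspace (flag_plane u)"
  unfolding flag_plane_def by (rule linear_subspace_image[OF linear_embed subspace_pauli_fix])

lemma subspace_flag_hyperplane: "subspace (flag_hyperplane u)"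
  unfolding flag_hyperplane_def
  by (rule linear_subspace_linear_preimage[OF linear_restrict subspace_pauli_fix])

lemma dim_flag_plane: "norm u = 1 \<Longrightarrow> dim (flag_plane u) = 2"
  unfolding flag_plane_def dim_embed_image by (rule dim_pauli_fix)

text \<open>flag_hyperplane u is the direct sum of flag_plane u and the kernel of restrict,
  which is complementary to the image of embed.\<close>
lemma dim_flag_hyperplane: "norm u = 1 \<Longrightarrow> dim (flag_hyperplane u) = CARD('n) - 2"
proof -
  assume u: "norm u = 1"
  define E where "E = {y :: real^'n. restrict y \<in> {0}}"
  have sE: "subspace E" unfolding E_def
    by (rule linear_subspace_linear_preimage[OF linear_restrict]) (simp add: subspace_def)
  have sR: "subspace (range embed)" by (rule linear_subspace_image[OF linear_embed subspace_UNIV])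
  have split: "y = embed (restrict y) + (y - embed (restrict y))" for y by simp
  have "0 \<in> range embed" by (metis embed_0 rangeI)
  then have "E \<inter> range embed = {0}" by (auto simp: E_def)
  moreover have "\<exists>a b. y = a + b \<and> a \<in> E \<and> b \<in> range embed" for y
    by (intro exI[of _ "y - embed (restrict y)"] exI[of _ "embed (restrict y)"]) (auto simp: E_def)
  ultimately have "dim E + dim (range embed) = CARD('n)"
    using dsum_univ_dim[OF sE sR] by (auto simp: dsum_univ_def)
  then have dimE: "dim E = CARD('n) - 4" using dim_embed_image[of UNIV] by simp
  have "flag_plane u \<inter> E = {0}"
    using subspace_0[OF subspace_flag_plane, of u] by (auto simp: flag_plane_def E_def)
  moreover have "{a + b |a b. a \<in> flag_plane u \<and> b \<in> E} = flag_hyperplane u"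
  proof (intro equalityI subsetI)
    fix y assume "y \<in> flag_hyperplane u"
    then show "y \<in> {a + b |a b. a \<in> flag_plane u \<and> b \<in> E}"
      using split[of y] by (fastforce simp: flag_plane_def flag_hyperplane_def E_def)
  qed (auto simp: flag_plane_def flag_hyperplane_def E_def)
  ultimately have "dim (flag_hyperplane u) = dim (flag_plane u) + dim E"
    using dim_sums_Int[OF subspace_flag_plane sE, of u] by simp
  then show ?thesis using dimE dim_flag_plane[OF u] card_ge_4 by simp
qed

lemma pauli_flag_in_flag22: "norm u = 1 \<Longrightarrow> pauli_flag u \<in> flag22"
  using subspace_flag_plane subspace_flag_hyperplane dim_flag_plane dim_flag_hyperplane
  by (auto simp: flag22_def pauli_flag_def flag_plane_def flag_hyperplane_def)

lemma flag_plane_dsum_univ: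
  assumes "norm u = 1" "norm v = 1" "u \<noteq> v"
  shows "dsum_univ (flag_plane u) (flag_hyperplane v)"
  unfolding dsum_univ_def
proof
  have "y = 0" if y: "y \<in> flag_plane u" "y \<in> flag_hyperplane v" for y
  proof -
    obtain x where "x \<in> pauli_fix u" "y = embed x" using y(1) by (auto simp: flag_plane_def)
    moreover from this have "x \<in> pauli_fix v" using y(2) by (simp add: flag_hyperplane_def)
    ultimately have "x = 0" using pauli_fix_disjoint[OF assms] by blast
    then show ?thesis using \<open>y = embed x\<close> by simp
  qed
  then show "flag_plane u \<inter> flag_hyperplane v = {0}"
    using subspace_0[OF subspace_flag_plane, of u] subspace_0[OF subspace_flag_hyperplane, of v] by auto
  have "y \<in> {a + b |a b. a \<in> flag_plane u \<and> b \<in> flag_hyperplane v}" for y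
  proof -
    have "restrict y \<in> {a + b |a b. a \<in> pauli_fix u \<and> b \<in> pauli_fix v}"
      using pauli_fix_dsum_univ[OF assms] by simp
    then obtain a b where ab: "restrict y = a + b" "a \<in> pauli_fix u" "b \<in> pauli_fix v" by blast
    then have "embed a \<in> flag_plane u" "y - embed a \<in> flag_hyperplane v"
      by (simp_all add: flag_plane_def flag_hyperplane_def)
    moreover have "y = embed a + (y - embed a)" by simp
    ultimately show ?thesis by blast
  qed
  then show "{a + b |a b. a \<in> flag_plane u \<and> b \<in> flag_hyperplane v} = UNIV" by auto
qed

text \<open>A hyperplane W of codimension 2 meets the image of embed nontrivially, and every
  nonzero vector of R^4 lies in some pauli_fix u.\<close>
lemma flag_plane_meets:
  assumes "subspace W" "dim W = CARD('n) - 2"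
  obtains u where "norm u = 1" "\<not> dsum_univ (flag_plane u) W"
proof -
  have sR: "subspace (range embed)" by (rule linear_subspace_image[OF linear_embed subspace_UNIV])
  have "dim {x + y |x y. x \<in> W \<and> y \<in> range embed} \<le> CARD('n)"
    using dim_subset_UNIV[of "{x + y |x y. x \<in> W \<and> y \<in> range embed}"] by simp
  moreover have "dim {x + y |x y. x \<in> W \<and> y \<in> range embed} + dim (W \<inter> range embed)
      = dim W + dim (range embed)"
    by (rule dim_sums_Int[OF assms(1) sR])
  moreover have "dim (range embed) = 4" using dim_embed_image[of UNIV] by simp
  ultimately have "dim (W \<inter> range embed) \<noteq> 0" using assms(2) card_ge_4 by linarith
  then have "\<not> W \<inter> range embed \<subseteq> {0}" by (metis dim_eq_0)
  then obtain x where x: "embed x \<in> W" "embed x \<noteq> 0" by blast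
  then have "x \<noteq> 0" by auto
  then obtain u where u: "norm u = 1" "x \<in> pauli_fix u" by (rule in_pauli_fix_hopf)
  then have "embed x \<in> flag_plane u \<inter> W" using x by (simp add: flag_plane_def)
  then have "\<not> dsum_univ (flag_plane u) W" using x(2) by (auto simp: dsum_univ_def)
  then show ?thesis using that u(1) by blast
qed

lemma pauli_flags_max_antipodal: "max_antipodal flag22 flag_antipodal (pauli_flag ` sphere 0 1)"
  unfolding max_antipodal_def antipodal_set_def
proof (intro conjI ballI impI)
  show "pauli_flag ` sphere 0 1 \<subseteq> flag22" using pauli_flag_in_flag22 by auto
next
  fix p q assume "p \<in> pauli_flag ` sphere 0 1" "q \<in> pauli_flag ` sphere 0 1" "p \<noteq> q"
  then obtain u v where "norm u = 1" "norm v = 1" "p = pauli_flag u" "q = pauli_flag v" "u \<noteq> v"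
    by (metis imageE mem_sphere_0)
  then show "flag_antipodal p q"
    using flag_plane_dsum_univ by (simp add: flag_antipodal_def pauli_flag_def)
next
  fix x :: "(real^'n) set \<times> (real^'n) set" assume "x \<in> flag22"
  then obtain V W where "x = (V, W)" "subspace W" "dim W = CARD('n) - 2" by (auto simp: flag22_def)
  moreover obtain u where "norm u = 1" "\<not> dsum_univ (flag_plane u) W"
    using flag_plane_meets calculation(2,3) by blast
  ultimately show "\<exists>y\<in>pauli_flag ` sphere 0 1. \<not> flag_antipodal x y"
    by (intro bexI[of _ "pauli_flag u"]) (auto simp: flag_antipodal_def pauli_flag_def)
qed

lemma closest_point_flag_plane:
  assumes "norm u = 1"
  shows "closest_point (flag_plane u) y = embed (pauli_proj u (restrict y))"
proof (rule closest_point_subspace_eqI[OF subspace_flag_plane])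
  show "embed (pauli_proj u (restrict y)) \<in> flag_plane u"
    using pauli_proj_in[OF assms] by (simp add: flag_plane_def)
  fix z assume "z \<in> flag_plane u"
  then obtain w where "w \<in> pauli_fix u" "z = embed w" by (auto simp: flag_plane_def)
  then show "inner (y - embed (pauli_proj u (restrict y))) z = 0"
    using pauli_proj_orthogonal[of w u "restrict y"]
    by (simp add: inner_commute[of _ "embed w"] inner_embed) (metis inner_commute)
qed

lemma closest_point_flag_hyperplane:
  assumes "norm u = 1"
  shows "closest_point (flag_hyperplane u) y = y - embed (restrict y) + embed (pauli_proj u (restrict y))"
proof (rule closest_point_subspace_eqI[OF subspace_flag_hyperplane])
  show "y - embed (restrict y) + embed (pauli_proj u (restrict y)) \<in> flag_hyperplane u"
    using pauli_proj_in[OF assms] by (simp add: flag_hyperplane_def)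
  fix z assume "z \<in> flag_hyperplane u"
  then show "inner (y - (y - embed (restrict y) + embed (pauli_proj u (restrict y)))) z = 0"
    using pauli_proj_orthogonal[of "restrict z" u "restrict y"]
    by (simp add: flag_hyperplane_def inner_embed flip: embed_diff)
qed

lemma flag_plane_inj:
  assumes "norm u = 1" "norm v = 1" "flag_plane u = flag_plane v"
  shows "u = v"
proof (rule ccontr)
  assume "u \<noteq> v"
  have "pauli_fix u = restrict ` flag_plane u" for u by (simp add: flag_plane_def image_image)
  then have "pauli_fix u = {0}" using pauli_fix_disjoint[OF assms(1,2) \<open>u \<noteq> v\<close>] assms(3) by simp
  then show False using dim_pauli_fix[OF assms(1)] by simp
qed

lemma pauli_flags_homeomorphic:
  "(flag_emb ` pauli_flag ` sphere 0 1) homeomorphic (sphere (0::real^3) 1)"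
proof -
  define F where "F u = (matrix (\<lambda>y. embed (pauli_proj u (restrict y))),
    matrix (\<lambda>y. y - embed (restrict y) + embed (pauli_proj u (restrict y))))" for u
  have F: "flag_emb (pauli_flag u) = F u" if "u \<in> sphere 0 1" for u
  proof -
    have "closest_point (flag_plane u) = (\<lambda>y. embed (pauli_proj u (restrict y)))"
      "closest_point (flag_hyperplane u) = (\<lambda>y. y - embed (restrict y) + embed (pauli_proj u (restrict y)))"
      using that by (simp_all add: fun_eq_iff closest_point_flag_plane closest_point_flag_hyperplane)
    then show ?thesis by (simp add: F_def flag_emb_def pauli_flag_def proj_mat_def)
  qed
  have eq: "embed (pauli_proj u x) = (1/2) *\<^sub>R (embed x + (u$1 *\<^sub>R embed (sigma1 x)
      + u$2 *\<^sub>R embed (sigma2 x) + u$3 *\<^sub>R embed (sigma3 x)))" for u x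
    by (simp add: pauli_proj_def pauli_def)
  have cont: "continuous_on (sphere 0 1) F"
    unfolding F_def eq by (intro continuous_on_matrix continuous_intros)
  have inj: "inj_on F (sphere 0 1)"
  proof (rule inj_onI)
    fix u v assume uv: "u \<in> sphere 0 1" "v \<in> sphere 0 1" "F u = F v"
    then have "flag_emb (pauli_flag u) = flag_emb (pauli_flag v)" using F by simp
    then have "proj_mat (flag_plane u) = proj_mat (flag_plane v)"
      by (simp add: flag_emb_def pauli_flag_def)
    then have "flag_plane u = flag_plane v" using proj_mat_inj subspace_flag_plane by blast
    then show "u = v" using flag_plane_inj uv(1,2) by simp
  qed
  have img: "F ` sphere 0 1 = flag_emb ` pauli_flag ` sphere 0 1"
    unfolding image_image using F by (rule image_cong[OF refl, symmetric])
  have "sphere (0::real^3) 1 homeomorphic (flag_emb ` pauli_flag ` sphere 0 1)"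
    using compact_sphere cont img inj by (rule homeomorphic_compact)
  then show ?thesis by (rule homeomorphic_sym[THEN iffD1])
qed

end

lemma flag22_max_antipodal_sphere:
  assumes "CARD('n) \<ge> 4"
  shows "\<exists>L :: ((real^'n) set \<times> (real^'n) set) set.
    max_antipodal flag22 flag_antipodal L \<and> (flag_emb ` L) homeomorphic (sphere (0 :: real^3) 1)"
proof -
  obtain idx :: "4 \<Rightarrow> 'n" where "inj idx"
    using card_le_inj[of "UNIV :: 4 set" "UNIV :: 'n set"] assms by auto
  then interpret coord4 idx by unfold_locales
  show ?thesis using pauli_flags_max_antipodal pauli_flags_homeomorphic by blast
qed

section \<open>Binary quadratic forms\<close>

definition binary_form :: "real \<Rightarrow> real \<Rightarrow> real \<Rightarrow> real \<Rightarrow> real \<Rightarrow> real" where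
  "binary_form A B C \<alpha> \<beta> = A * \<alpha>\<^sup>2 + 2 * B * \<alpha> * \<beta> + C * \<beta>\<^sup>2"

definition pos_def_binary :: "real \<Rightarrow> real \<Rightarrow> real \<Rightarrow> bool" where
  "pos_def_binary A B C \<longleftrightarrow> (\<forall>\<alpha> \<beta>. (\<alpha>, \<beta>) \<noteq> (0, 0) \<longrightarrow> binary_form A B C \<alpha> \<beta> > 0)"

lemma binary_form_scaled:
  "A * binary_form A B C \<alpha> \<beta> = (A * \<alpha> + B * \<beta>)\<^sup>2 + (A * C - B\<^sup>2) * \<beta>\<^sup>2"
  by (simp add: binary_form_def algebra_simps power2_eq_square)

lemma binary_form_cases:
  obtains \<alpha> \<beta> where "(\<alpha>, \<beta>) \<noteq> (0, 0)" "binary_form A B C \<alpha> \<beta> = 0"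
  | "pos_def_binary A B C"
  | "pos_def_binary (- A) (- B) (- C)"
proof -
  consider "A = 0" | "A \<noteq> 0" "B\<^sup>2 \<ge> A * C" | "B\<^sup>2 < A * C" by linarith
  then show ?thesis
  proof cases
    case 1
    then show ?thesis using that(1)[of 1 0] by (simp add: binary_form_def)
  next
    case 2
    define \<alpha> where "\<alpha> = (sqrt (B\<^sup>2 - A * C) - B) / A"
    have "A * \<alpha> + B * 1 = sqrt (B\<^sup>2 - A * C)" using 2 by (simp add: \<alpha>_def)
    then have "A * binary_form A B C \<alpha> 1 = 0"
      unfolding binary_form_scaled using 2 by simp
    then show ?thesis using that(1)[of \<alpha> 1] 2 by simp
  next
    case 3
    then have "A \<noteq> 0" using zero_le_power2[of B] by (metis mult_zero_left not_less)
    have key: "A * binary_form A B C \<alpha> \<beta> > 0" if "(\<alpha>, \<beta>) \<noteq> (0, 0)" for \<alpha> \<beta>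
    proof (cases "\<beta> = 0")
      case True
      then show ?thesis using that \<open>A \<noteq> 0\<close> unfolding binary_form_scaled by simp
    next
      case False
      then have "(A * C - B\<^sup>2) * \<beta>\<^sup>2 > 0" using 3 by simp
      then show ?thesis unfolding binary_form_scaled by (smt (verit) zero_le_power2)
    qed
    show ?thesis
    proof (cases "A > 0")
      case True
      then show ?thesis
        using that(2) key unfolding pos_def_binary_def by (simp add: zero_less_mult_iff)
    next
      case False
      then have "A < 0" using \<open>A \<noteq> 0\<close> by linarith
      have "binary_form (- A) (- B) (- C) \<alpha> \<beta> = - binary_form A B C \<alpha> \<beta>" for \<alpha> \<beta>
        by (simp add: binary_form_def)
      then show ?thesis
        using that(3) key \<open>A < 0\<close> unfolding pos_def_binary_def by (simp add: zero_less_mult_iff)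
    qed
  qed
qed

lemma det_less_of_pos_def_increment:
  assumes p: "p11 \<ge> 0" "p22 \<ge> 0" "p12\<^sup>2 \<le> p11 * p22"
    and pos: "pos_def_binary (q11 - p11) (q12 - p12) (q22 - p22)"
  shows "p11 * p22 - p12\<^sup>2 < q11 * q22 - q12\<^sup>2"
proof -
  define r11 r12 r22 where "r11 = q11 - p11" "r12 = q12 - p12" "r22 = q22 - p22"
  have r: "binary_form r11 r12 r22 \<alpha> \<beta> > 0" if "(\<alpha>, \<beta>) \<noteq> (0, 0)" for \<alpha> \<beta>
    using pos that unfolding r11_r12_r22_def pos_def_binary_def by blast
  have r11: "r11 > 0" using r[of 1 0] by (simp add: binary_form_def)
  have r22: "r22 > 0" using r[of 0 1] by (simp add: binary_form_def)
  have "r11 * binary_form r11 r12 r22 (- r12) r11 > 0" using r[of "- r12" r11] r11 by simp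
  then have dR: "r11 * r22 - r12\<^sup>2 > 0"
    unfolding binary_form_scaled using r11 by (simp add: zero_less_mult_iff)
  define m where "m = p11 * r22 + p22 * r11"
  have "m\<^sup>2 - 4 * (p11 * p22) * (r11 * r22) = (p11 * r22 - p22 * r11)\<^sup>2"
    by (simp add: m_def algebra_simps power2_eq_square)
  then have "4 * (p11 * p22) * (r11 * r22) \<le> m\<^sup>2" by (smt (verit) zero_le_power2)
  moreover have "p12\<^sup>2 * r12\<^sup>2 \<le> (p11 * p22) * (r11 * r22)"
    using p dR by (intro mult_mono) auto
  ultimately have "(2 * p12 * r12)\<^sup>2 \<le> m\<^sup>2" by (simp add: power_mult_distrib)
  then have "2 * p12 * r12 \<le> m" using p r11 r22 power2_le_imp_le[of "2 * p12 * r12" m] by (simp add: m_def)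
  moreover have "q11 * q22 - q12\<^sup>2 = (p11 * p22 - p12\<^sup>2) + (r11 * r22 - r12\<^sup>2) + (m - 2 * p12 * r12)"
    unfolding m_def r11_r12_r22_def by (simp add: algebra_simps power2_eq_square)
  ultimately show ?thesis using dR by linarith
qed

section \<open>Symplectic forms and compatible complex structures\<close>

locale symplectic =
  fixes \<omega> :: "'a::euclidean_space \<Rightarrow> 'a \<Rightarrow> real"
  assumes symplectic: "symplectic_form \<omega>"
begin

lemma bilinear_omega: "bilinear \<omega>" using symplectic by (simp add: symplectic_form_def)
lemma omega_self[simp]: "\<omega> x x = 0" using symplectic by (simp add: symplectic_form_def)
lemma nondegenerate: "(\<And>y. \<omega> x y = 0) \<Longrightarrow> x = 0" using symplectic by (auto simp: symplectic_form_def)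

lemma omega_ladd[simp]: "\<omega> (x + y) z = \<omega> x z + \<omega> y z" by (rule bilinear_ladd[OF bilinear_omega])
lemma omega_radd[simp]: "\<omega> z (x + y) = \<omega> z x + \<omega> z y" by (rule bilinear_radd[OF bilinear_omega])
lemma omega_lmul[simp]: "\<omega> (c *\<^sub>R x) y = c * \<omega> x y" using bilinear_lmul[OF bilinear_omega] by simp
lemma omega_rmul[simp]: "\<omega> x (c *\<^sub>R y) = c * \<omega> x y" using bilinear_rmul[OF bilinear_omega] by simp
lemma omega_lsub[simp]: "\<omega> (x - y) z = \<omega> x z - \<omega> y z" by (rule bilinear_lsub[OF bilinear_omega])
lemma omega_rsub[simp]: "\<omega> z (x - y) = \<omega> z x - \<omega> z y" by (rule bilinear_rsub[OF bilinear_omega])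
lemma omega_lneg[simp]: "\<omega> (- x) y = - \<omega> x y" by (rule bilinear_lneg[OF bilinear_omega])
lemma omega_rneg[simp]: "\<omega> x (- y) = - \<omega> x y" by (rule bilinear_rneg[OF bilinear_omega])
lemma omega_lzero[simp]: "\<omega> 0 y = 0" by (rule bilinear_lzero[OF bilinear_omega])
lemma omega_rzero[simp]: "\<omega> x 0 = 0" by (rule bilinear_rzero[OF bilinear_omega])

lemma skew: "\<omega> y x = - \<omega> x y"
proof -
  have "0 = \<omega> (x + y) (x + y)" by simp
  also have "\<dots> = \<omega> x y + \<omega> y x" by (simp only: omega_ladd omega_radd) simp
  finally show ?thesis by linarith
qed

definition nondeg_on :: "'a set \<Rightarrow> bool" where
  "nondeg_on V \<longleftrightarrow> (\<forall>x\<in>V. (\<forall>y\<in>V. \<omega> x y = 0) \<longrightarrow> x = 0)"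

text \<open>For such K, -\<omega> u (K v) is an inner product on V.\<close>
definition compatible_on :: "'a set \<Rightarrow> ('a \<Rightarrow> 'a) \<Rightarrow> bool" where
  "compatible_on V K \<longleftrightarrow> linear K \<and> (\<forall>v\<in>V. K v \<in> V) \<and> (\<forall>v\<in>V. K (K v) = - v)
     \<and> (\<forall>u\<in>V. \<forall>v\<in>V. \<omega> u (K v) = \<omega> v (K u)) \<and> (\<forall>u\<in>V. u \<noteq> 0 \<longrightarrow> \<omega> u (K u) < 0)"

lemma symp_orth_span_pair: "x \<in> symp_orth \<omega> (span {a, b}) \<longleftrightarrow> \<omega> x a = 0 \<and> \<omega> x b = 0"
proof
  have "a \<in> span {a, b}" "b \<in> span {a, b}" by (simp_all add: span_base)
  then show "x \<in> symp_orth \<omega> (span {a, b}) \<Longrightarrow> \<omega> x a = 0 \<and> \<omega> x b = 0"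
    by (simp add: symp_orth_def)
qed (auto simp: symp_orth_def span_pair)

lemma pair_complement:
  assumes V: "subspace V" and xy: "x \<in> V" "y \<in> V" "\<omega> x y = 1"
  defines "V' \<equiv> {z\<in>V. \<omega> x z = 0 \<and> \<omega> y z = 0}"
    and "p \<equiv> \<lambda>v. v - \<omega> v y *\<^sub>R x - \<omega> x v *\<^sub>R y"
  shows "subspace V'" "V' \<subset> V" "\<And>v. v \<in> V \<Longrightarrow> p v \<in> V'"
    "\<And>w. w \<in> V' \<Longrightarrow> p w = w" "\<And>u w. w \<in> V' \<Longrightarrow> \<omega> u w = \<omega> (p u) w"
    "nondeg_on V \<Longrightarrow> nondeg_on V'"
proof -
  have yx: "\<omega> y x = -1" using skew[of y x] xy by simp
  have orth: "\<omega> w x = 0" "\<omega> w y = 0" if "w \<in> V'" for w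
    using that skew[of w x] skew[of w y] by (auto simp: V'_def)
  show "subspace V'" unfolding V'_def subspace_def using V by (auto simp: subspace_def)
  have "V' \<subseteq> V" "x \<in> V - V'" using xy(1) yx by (auto simp: V'_def)
  then show "V' \<subset> V" by blast
  show pV': "p v \<in> V'" if "v \<in> V" for v
  proof -
    have "p v \<in> V" unfolding p_def using V xy that by (intro subspace_diff subspace_scale) auto
    then show ?thesis unfolding V'_def p_def using xy yx skew[of y v] by (simp add: algebra_simps)
  qed
  show "p w = w" if "w \<in> V'" for w using orth[OF that] that by (simp add: p_def V'_def)
  show om_p: "\<omega> u w = \<omega> (p u) w" if "w \<in> V'" for u w
    using that by (simp add: p_def V'_def)
  assume nd: "nondeg_on V"
  show "nondeg_on V'"
    unfolding nondeg_on_def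
  proof (intro ballI impI)
    fix z assume z: "z \<in> V'" and h: "\<forall>w\<in>V'. \<omega> z w = 0"
    have "\<omega> z v = 0" if "v \<in> V" for v
    proof -
      have "\<omega> z v = \<omega> z (p v + \<omega> v y *\<^sub>R x + \<omega> x v *\<^sub>R y)" by (simp add: p_def)
      then show ?thesis using h pV'[OF that] orth[OF z] by simp
    qed
    then show "z = 0" using nd z unfolding nondeg_on_def V'_def by auto
  qed
qed

lemma compatible_on_extend:
  assumes V: "subspace V" and xy: "x \<in> V" "y \<in> V" "\<omega> x y = 1"
    and K': "compatible_on {z\<in>V. \<omega> x z = 0 \<and> \<omega> y z = 0} K'"
  shows "compatible_on V
    (\<lambda>v. K' (v - \<omega> v y *\<^sub>R x - \<omega> x v *\<^sub>R y) - \<omega> v y *\<^sub>R y + \<omega> x v *\<^sub>R x)"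
proof -
  define V' where "V' = {z\<in>V. \<omega> x z = 0 \<and> \<omega> y z = 0}"
  define p where "p v = v - \<omega> v y *\<^sub>R x - \<omega> x v *\<^sub>R y" for v
  define K where "K v = K' (p v) - \<omega> v y *\<^sub>R y + \<omega> x v *\<^sub>R x" for v
  note R = pair_complement[OF V xy, folded V'_def, unfolded p_def[symmetric]]
  have linK': "linear K'" and K'V': "\<And>v. v \<in> V' \<Longrightarrow> K' v \<in> V'"
    and K'K': "\<And>v. v \<in> V' \<Longrightarrow> K' (K' v) = - v"
    and K'sym: "\<And>u v. u \<in> V' \<Longrightarrow> v \<in> V' \<Longrightarrow> \<omega> u (K' v) = \<omega> v (K' u)"
    and K'neg: "\<And>u. u \<in> V' \<Longrightarrow> u \<noteq> 0 \<Longrightarrow> \<omega> u (K' u) < 0"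
    using K' by (auto simp: compatible_on_def V'_def)
  have K'p: "K' (p v) \<in> V'" if "v \<in> V" for v using K'V' R(3)[OF that] .
  have orth: "\<omega> x w = 0" "\<omega> y w = 0" if "w \<in> V'" for w using that by (auto simp: V'_def)
  have yx: "\<omega> y x = -1" using skew[of y x] xy by simp
  have "linear K"
    by (rule linearI)
      (simp_all add: K_def p_def linear_add[OF linK'] linear_diff[OF linK'] linear_scale[OF linK'] algebra_simps)
  moreover have "K v \<in> V" if "v \<in> V" for v
    unfolding K_def using K'p[OF that] R(2) V xy by (intro subspace_add subspace_diff subspace_scale) auto
  moreover have KK: "K (K v) = - v" if "v \<in> V" for v
  proof -
    have "\<omega> (K v) y = \<omega> x v" "\<omega> x (K v) = - \<omega> v y"
      using orth[OF K'p[OF that]] skew[of "K' (p v)"] xy yx by (simp_all add: K_def)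
    then have "p (K v) = K' (p v)" using R(4)[OF K'p[OF that]] by (simp add: p_def K_def)
    then have "K (K v) = K' (K' (p v)) - \<omega> x v *\<^sub>R y - \<omega> v y *\<^sub>R x"
      using \<open>\<omega> (K v) y = \<omega> x v\<close> \<open>\<omega> x (K v) = - \<omega> v y\<close> by (simp add: K_def[of "K v"])
    also have "\<dots> = - v" using K'K'[OF R(3)[OF that]] by (simp add: p_def)
    finally show ?thesis .
  qed
  moreover have oK: "\<omega> u (K v) = \<omega> (p u) (K' (p v)) - \<omega> v y * \<omega> u y - \<omega> x v * \<omega> x u"
    if "v \<in> V" for u v
    using R(5)[OF K'p[OF that], of u] skew[of u x] by (simp add: K_def)
  moreover have "\<omega> u (K v) = \<omega> v (K u)" if "u \<in> V" "v \<in> V" for u v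
    using oK[OF that(1), of v] oK[OF that(2), of u] K'sym[OF R(3)[OF that(2)] R(3)[OF that(1)]]
    by (simp add: algebra_simps)
  moreover have "\<omega> u (K u) < 0" if "u \<in> V" "u \<noteq> 0" for u
  proof -
    have "\<omega> (p u) (K' (p u)) < 0 \<or> \<omega> (p u) (K' (p u)) = 0 \<and> (\<omega> u y \<noteq> 0 \<or> \<omega> x u \<noteq> 0)"
      using K'neg[OF R(3)[OF that(1)]] that(2) linear_0[OF linK'] by (cases "p u = 0") (auto simp: p_def)
    then show ?thesis
      unfolding oK[OF that(1)] by (smt (verit) zero_le_square not_real_square_gt_zero)
  qed
  ultimately show ?thesis unfolding compatible_on_def K_def p_def by blast
qed

lemma compatible_on_exists:
  assumes "subspace V" "nondeg_on V"
  shows "\<exists>K. compatible_on V K"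
  using assms
proof (induction "dim V" arbitrary: V rule: less_induct)
  case less
  show ?case
  proof (cases "V \<subseteq> {0}")
    case True
    then show ?thesis by (intro exI[of _ id]) (auto simp: compatible_on_def linear_id)
  next
    case False
    then obtain x where x: "x \<in> V" "x \<noteq> 0" by auto
    then obtain y0 where y0: "y0 \<in> V" "\<omega> x y0 \<noteq> 0" using less.prems unfolding nondeg_on_def by auto
    define y where "y = (1 / \<omega> x y0) *\<^sub>R y0"
    have y: "y \<in> V" "\<omega> x y = 1" using y0 less.prems(1) by (auto simp: y_def subspace_scale)
    note R = pair_complement[OF less.prems(1) x(1) y]
    have "dim {z\<in>V. \<omega> x z = 0 \<and> \<omega> y z = 0} < dim V"
      using R(1,2) less.prems(1) dim_psubset[of "{z\<in>V. \<omega> x z = 0 \<and> \<omega> y z = 0}" V] by (metis span_eq_iff)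
    then show ?thesis
      using less.hyps R(1) R(6)[OF less.prems(2)] compatible_on_extend[OF less.prems(1) x(1) y] by blast
  qed
qed

lemma symplectic_pair_exists: "\<exists>e f. \<omega> e f = 1"
proof -
  obtain x :: 'a where "x \<noteq> 0" using nonempty_Basis by (metis all_not_in_conv nonzero_Basis)
  then obtain y where "\<omega> x y \<noteq> 0" using nondegenerate by blast
  then have "\<omega> x ((1 / \<omega> x y) *\<^sub>R y) = 1" by simp
  then show ?thesis by blast
qed

lemma nondeg_on_symp_orth_pair:
  assumes "\<omega> e f = 1"
  shows "nondeg_on {z. \<omega> e z = 0 \<and> \<omega> f z = 0}"
proof -
  have "nondeg_on UNIV" unfolding nondeg_on_def using nondegenerate by blast
  then show ?thesis using pair_complement(6)[OF subspace_UNIV UNIV_I UNIV_I assms] by simp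
qed

lemma iso_antipodal_span_pair:
  assumes det: "\<omega> a a' * \<omega> b b' - \<omega> a b' * \<omega> b a' \<noteq> 0"
  shows "iso_antipodal \<omega> (span {a, b}) (span {a', b'})"
proof -
  define D where "D = \<omega> a a' * \<omega> b b' - \<omega> a b' * \<omega> b a'"
  have "x = 0" if hx: "x \<in> span {a, b}" "\<omega> x a' = 0" "\<omega> x b' = 0" for x
  proof -
    obtain \<alpha> \<beta> where x: "x = \<alpha> *\<^sub>R a + \<beta> *\<^sub>R b" using hx(1) unfolding span_pair by blast
    have "\<alpha> * D = \<omega> b b' * \<omega> x a' - \<omega> b a' * \<omega> x b'"
      "\<beta> * D = \<omega> a a' * \<omega> x b' - \<omega> a b' * \<omega> x a'"
      unfolding x D_def by (simp_all add: algebra_simps)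
    then have "\<alpha> = 0" "\<beta> = 0" using hx(2,3) det by (simp_all add: D_def)
    then show ?thesis using x by simp
  qed
  then have "span {a, b} \<inter> symp_orth \<omega> (span {a', b'}) = {0}"
    by (auto simp: symp_orth_span_pair span_zero)
  moreover have "\<exists>p q. w = p + q \<and> p \<in> span {a, b} \<and> q \<in> symp_orth \<omega> (span {a', b'})" for w
  proof -
    define \<alpha> \<beta> where "\<alpha> = (\<omega> w a' * \<omega> b b' - \<omega> w b' * \<omega> b a') / D"
      and "\<beta> = (\<omega> a a' * \<omega> w b' - \<omega> a b' * \<omega> w a') / D"
    have "\<omega> (\<alpha> *\<^sub>R a + \<beta> *\<^sub>R b) a' = \<omega> w a' * D / D"
      "\<omega> (\<alpha> *\<^sub>R a + \<beta> *\<^sub>R b) b' = \<omega> w b' * D / D"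
      unfolding \<alpha>_def \<beta>_def D_def by (simp_all add: add_divide_distrib[symmetric] algebra_simps)
    then have "w - (\<alpha> *\<^sub>R a + \<beta> *\<^sub>R b) \<in> symp_orth \<omega> (span {a', b'})"
      using det by (simp add: symp_orth_span_pair D_def)
    moreover have "\<alpha> *\<^sub>R a + \<beta> *\<^sub>R b \<in> span {a, b}" unfolding span_pair by blast
    ultimately show ?thesis by (metis add.commute diff_add_cancel)
  qed
  ultimately show ?thesis unfolding iso_antipodal_def dsum_univ_def by blast
qed

end

section \<open>A sphere of pairwise antipodal isotropic planes\<close>

locale iso_family = symplectic \<omega> for \<omega> :: "real^'n \<Rightarrow> real^'n \<Rightarrow> real" +
  fixes e f :: "real^'n" and K :: "real^'n \<Rightarrow> real^'n"
  assumes ef: "\<omega> e f = 1"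
    and compatible: "compatible_on {z. \<omega> e z = 0 \<and> \<omega> f z = 0} K"
begin

definition C :: "(real^'n) set" where "C = {z. \<omega> e z = 0 \<and> \<omega> f z = 0}"

definition gK :: "real^'n \<Rightarrow> real^'n \<Rightarrow> real" where "gK u v = - \<omega> u (K v)"

definition gK_sphere :: "(real^'n) set" where "gK_sphere = {u \<in> C. gK u u = 1}"

definition iso_plane :: "real^'n \<Rightarrow> (real^'n) set" where "iso_plane u = span {e + u, f + K u}"

lemma omega_f_e: "\<omega> f e = -1" using skew[of f e] ef by simp

lemma C_orth: assumes "u \<in> C" shows "\<omega> e u = 0" "\<omega> f u = 0" "\<omega> u e = 0" "\<omega> u f = 0"
  using assms skew[of u e] skew[of u f] by (auto simp: C_def)

lemma subspace_C: "subspace C" unfolding C_def subspace_def by auto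

lemma linear_K: "linear K" and K_C: "v \<in> C \<Longrightarrow> K v \<in> C" and KK: "v \<in> C \<Longrightarrow> K (K v) = - v"
  and K_sym: "u \<in> C \<Longrightarrow> v \<in> C \<Longrightarrow> \<omega> u (K v) = \<omega> v (K u)"
  and K_neg: "u \<in> C \<Longrightarrow> u \<noteq> 0 \<Longrightarrow> \<omega> u (K u) < 0"
  using compatible by (auto simp: compatible_on_def C_def)

lemma K_add[simp]: "K (x + y) = K x + K y" by (rule linear_add[OF linear_K])
lemma K_scale[simp]: "K (c *\<^sub>R x) = c *\<^sub>R K x" by (rule linear_scale[OF linear_K])
lemma K_diff[simp]: "K (x - y) = K x - K y" by (rule linear_diff[OF linear_K])
lemma K_minus[simp]: "K (- x) = - K x" by (rule linear_neg[OF linear_K])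
lemma K_0[simp]: "K 0 = 0" by (rule linear_0[OF linear_K])

lemma gK_ladd[simp]: "gK (x + y) z = gK x z + gK y z" by (simp add: gK_def)
lemma gK_radd[simp]: "gK z (x + y) = gK z x + gK z y" by (simp add: gK_def)
lemma gK_lmul[simp]: "gK (c *\<^sub>R x) y = c * gK x y" by (simp add: gK_def)
lemma gK_rmul[simp]: "gK x (c *\<^sub>R y) = c * gK x y" by (simp add: gK_def)
lemma gK_lsub[simp]: "gK (x - y) z = gK x z - gK y z" by (simp add: gK_def)
lemma gK_rsub[simp]: "gK z (x - y) = gK z x - gK z y" by (simp add: gK_def)
lemma gK_lzero[simp]: "gK 0 y = 0" by (simp add: gK_def)
lemma gK_rzero[simp]: "gK x 0 = 0" by (simp add: gK_def)

lemma gK_sym: "u \<in> C \<Longrightarrow> v \<in> C \<Longrightarrow> gK u v = gK v u" by (simp add: gK_def K_sym)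
lemma gK_pos: "u \<in> C \<Longrightarrow> u \<noteq> 0 \<Longrightarrow> gK u u > 0" using K_neg by (simp add: gK_def)
lemma gK_nonneg: "u \<in> C \<Longrightarrow> gK u u \<ge> 0" using gK_pos[of u] by (cases "u = 0") auto
lemma gK_eq_0: "u \<in> C \<Longrightarrow> gK u u = 0 \<Longrightarrow> u = 0" using gK_pos by fastforce
lemma gK_K: "v \<in> C \<Longrightarrow> gK u (K v) = \<omega> u v" by (simp add: gK_def KK)
lemma omega_K: "\<omega> u (K v) = - gK u v" by (simp add: gK_def)
lemma gK_KK: "u \<in> C \<Longrightarrow> v \<in> C \<Longrightarrow> gK (K u) (K v) = gK u v"
  by (simp add: gK_K K_C) (metis gK_def K_sym skew minus_minus)
lemma omega_KK: "u \<in> C \<Longrightarrow> v \<in> C \<Longrightarrow> \<omega> (K u) (K v) = \<omega> u v"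
  using gK_KK[of u "K v"] by (simp add: gK_def KK K_C)
lemma gK_self_K: "u \<in> C \<Longrightarrow> gK u (K u) = 0" by (simp add: gK_K)

lemma continuous_on_gK: "continuous_on T (\<lambda>w. gK w w)"
proof -
  have "continuous_on T (\<lambda>w. \<omega> w (K w))"
    by (intro bilinear_continuous_on_compose[OF continuous_on_id _ bilinear_omega] linear_continuous_on
        linear_conv_bounded_linear[THEN iffD1, OF linear_K])
  then show ?thesis unfolding gK_def by (intro continuous_intros)
qed

lemma omega_shifts:
  assumes "u \<in> C" "v \<in> C"
  shows "\<omega> (e + u) (e + v) = \<omega> u v" "\<omega> (e + u) (f + K v) = 1 - gK u v"
    "\<omega> (f + K u) (e + v) = gK u v - 1" "\<omega> (f + K u) (f + K v) = \<omega> u v"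
proof -
  note C_orth[OF assms(1)] C_orth[OF assms(2)] C_orth[OF K_C[OF assms(1)]] C_orth[OF K_C[OF assms(2)]]
  then show "\<omega> (e + u) (e + v) = \<omega> u v" "\<omega> (e + u) (f + K v) = 1 - gK u v"
    "\<omega> (f + K u) (f + K v) = \<omega> u v"
    using ef omega_KK[OF assms] by (simp_all add: omega_K)
  have "\<omega> (K u) v = gK u v" using skew[of "K u" v] gK_sym[OF assms] by (simp add: omega_K)
  then show "\<omega> (f + K u) (e + v) = gK u v - 1"
    using \<open>\<omega> f v = 0\<close> \<open>\<omega> (K u) e = 0\<close> omega_f_e by simp
qed

lemma shifts_independent:
  assumes "u \<in> C" "\<alpha> *\<^sub>R (e + u) + \<beta> *\<^sub>R (f + K u) = 0"
  shows "\<alpha> = 0 \<and> \<beta> = 0"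
proof -
  have "\<omega> (\<alpha> *\<^sub>R (e + u) + \<beta> *\<^sub>R (f + K u)) f = 0" "\<omega> e (\<alpha> *\<^sub>R (e + u) + \<beta> *\<^sub>R (f + K u)) = 0"
    using assms(2) by simp_all
  then show ?thesis using C_orth[OF assms(1)] C_orth[OF K_C[OF assms(1)]] ef by simp
qed

lemma iso_plane_in_iso2:
  assumes "u \<in> gK_sphere" shows "iso_plane u \<in> iso2 \<omega>"
proof -
  have u: "u \<in> C" "gK u u = 1" using assms by (auto simp: gK_sphere_def)
  define a b where "a = e + u" and "b = f + K u"
  have "\<omega> a b = 0" "\<omega> b a = 0" using omega_shifts[OF u(1) u(1)] u(2) by (simp_all add: a_def b_def)
  then have "\<omega> x y = 0" if "x \<in> span {a, b}" "y \<in> span {a, b}" for x y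
    using that unfolding span_pair by (auto simp: algebra_simps)
  moreover have "dim (span {a, b}) = 2"
    using dim_span_pair[of a b, OF shifts_independent[OF u(1)]] by (simp add: a_def b_def)
  ultimately show ?thesis by (simp add: iso2_def iso_plane_def a_def b_def)
qed

lemma iso_plane_antipodal:
  assumes "u \<in> gK_sphere" "v \<in> gK_sphere" "u \<noteq> v"
  shows "iso_antipodal \<omega> (iso_plane u) (iso_plane v)"
proof -
  have u: "u \<in> C" "gK u u = 1" and v: "v \<in> C" "gK v v = 1" using assms by (auto simp: gK_sphere_def)
  have "gK (u - v) (u - v) = 2 * (1 - gK u v)" using u v gK_sym[OF u(1) v(1)] by simp
  moreover have "u - v \<in> C" using subspace_diff[OF subspace_C u(1) v(1)] .
  ultimately have "(\<omega> u v)\<^sup>2 + (1 - gK u v)\<^sup>2 \<noteq> 0" using gK_eq_0 assms(3) by fastforce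
  moreover have "\<omega> (e + u) (e + v) * \<omega> (f + K u) (f + K v) - \<omega> (e + u) (f + K v) * \<omega> (f + K u) (e + v)
      = (\<omega> u v)\<^sup>2 + (1 - gK u v)\<^sup>2"
    unfolding omega_shifts[OF u(1) v(1)] by (simp add: power2_eq_square algebra_simps)
  ultimately show ?thesis unfolding iso_plane_def by (intro iso_antipodal_span_pair) simp
qed

lemma iso_plane_not_antipodal_self:
  assumes "u \<in> gK_sphere" shows "\<not> iso_antipodal \<omega> (iso_plane u) (iso_plane u)"
proof -
  have u: "u \<in> C" "gK u u = 1" using assms by (auto simp: gK_sphere_def)
  have "e + u \<in> iso_plane u \<inter> symp_orth \<omega> (iso_plane u)"
    using omega_shifts[OF u(1) u(1)] u(2) by (simp add: iso_plane_def symp_orth_span_pair span_base)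
  moreover have "e + u \<noteq> 0" using shifts_independent[OF u(1), of 1 0] by auto
  ultimately show ?thesis unfolding iso_antipodal_def dsum_univ_def by blast
qed

lemma iso_plane_inj: "u \<in> gK_sphere \<Longrightarrow> v \<in> gK_sphere \<Longrightarrow> iso_plane u = iso_plane v \<Longrightarrow> u = v"
  using iso_plane_antipodal iso_plane_not_antipodal_self by metis

lemma dim_C: "dim C = CARD('n) - 2"
proof -
  have ef_indep: "\<alpha> = 0 \<and> \<beta> = 0" if "\<alpha> *\<^sub>R e + \<beta> *\<^sub>R f = 0" for \<alpha> \<beta>
  proof -
    have "\<omega> (\<alpha> *\<^sub>R e + \<beta> *\<^sub>R f) f = 0" "\<omega> e (\<alpha> *\<^sub>R e + \<beta> *\<^sub>R f) = 0" using that by simp_all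
    then show ?thesis using ef by simp
  qed
  have "x = 0" if "x \<in> span {e, f}" "x \<in> C" for x
    using that ef omega_f_e unfolding span_pair C_def by auto
  then have "span {e, f} \<inter> C = {0}" using span_zero subspace_0[OF subspace_C] by blast
  moreover have "\<exists>x y. v = x + y \<and> x \<in> span {e, f} \<and> y \<in> C" for v
  proof -
    have "v - \<omega> v f *\<^sub>R e - \<omega> e v *\<^sub>R f \<in> C"
      unfolding C_def using ef omega_f_e skew[of v e] skew[of v f] by simp
    moreover have "\<omega> v f *\<^sub>R e + \<omega> e v *\<^sub>R f \<in> span {e, f}" unfolding span_pair by blast
    ultimately show ?thesis by (metis add.commute diff_add_cancel diff_diff_eq)
  qed
  ultimately have "dim (span {e, f}) + dim C = CARD('n)"
    using dsum_univ_dim[OF subspace_span subspace_C, of "{e, f}"] by (simp add: dsum_univ_def set_eq_iff)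
  then show ?thesis using dim_span_pair[of e f, OF ef_indep] by simp
qed


definition e_coord :: "real^'n \<Rightarrow> real" where "e_coord x = \<omega> x f"
definition f_coord :: "real^'n \<Rightarrow> real" where "f_coord x = - \<omega> x e"
definition C_part :: "real^'n \<Rightarrow> real^'n" where
  "C_part x = x - e_coord x *\<^sub>R e - f_coord x *\<^sub>R f"

lemma C_part_in_C: "C_part x \<in> C"
  unfolding C_def C_part_def e_coord_def f_coord_def using ef omega_f_e skew[of e x] skew[of f x] by simp

lemma C_part_eq_0: "C_part x = 0 \<Longrightarrow> e_coord x = 0 \<Longrightarrow> f_coord x = 0 \<Longrightarrow> x = 0"
  by (simp add: C_part_def)

lemma e_coord_comb[simp]: "e_coord (\<alpha> *\<^sub>R x + \<beta> *\<^sub>R y) = \<alpha> * e_coord x + \<beta> * e_coord y"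
  by (simp add: e_coord_def)
lemma f_coord_comb[simp]: "f_coord (\<alpha> *\<^sub>R x + \<beta> *\<^sub>R y) = \<alpha> * f_coord x + \<beta> * f_coord y"
  by (simp add: f_coord_def algebra_simps)
lemma C_part_comb[simp]: "C_part (\<alpha> *\<^sub>R x + \<beta> *\<^sub>R y) = \<alpha> *\<^sub>R C_part x + \<beta> *\<^sub>R C_part y"
  by (simp add: C_part_def algebra_simps)

lemma linear_gK: "linear (gK u)" by (rule linearI) simp_all

lemma omega_C_part: "u \<in> C \<Longrightarrow> \<omega> (C_part x) u = \<omega> x u"
  using C_orth[of u] by (simp add: C_part_def)

lemma omega_C_part_C_part:
  "\<omega> (C_part x) (C_part y) = \<omega> x y - (e_coord x * f_coord y - f_coord x * e_coord y)"
  unfolding C_part_def e_coord_def f_coord_def using ef omega_f_e skew[of e y] skew[of f y]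
  by (simp add: algebra_simps)

lemma omega_shifts_coords:
  assumes "u \<in> C"
  shows "\<omega> x (e + u) = \<omega> (C_part x) u - f_coord x" "\<omega> x (f + K u) = e_coord x - gK (C_part x) u"
  using omega_C_part[OF assms] omega_C_part[OF K_C[OF assms]]
  by (simp_all add: f_coord_def e_coord_def omega_K)

text \<open>u0 = (s q - t K q) / g(q, q) has the prescribed pairings with q; if it is too short,
  a g-orthogonal direction, which exists when dim C \<ge> 3, makes it a unit vector.\<close>
lemma gK_sphere_prescribed_pairings:
  assumes q: "q \<in> C" "gK q q > 0" and st: "s\<^sup>2 + t\<^sup>2 \<le> gK q q"
    and room: "s\<^sup>2 + t\<^sup>2 = gK q q \<or> dim C \<ge> 3"
  shows "\<exists>u\<in>gK_sphere. \<omega> q u = t \<and> gK q u = s"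
proof -
  define N where "N = gK q q"
  have Kq: "K q \<in> C" using K_C q(1) .
  have q_Kq: "gK q (K q) = 0" "gK (K q) q = 0" "gK (K q) (K q) = N" "\<omega> q (K q) = - N"
    using gK_self_K[OF q(1)] gK_sym[OF q(1) Kq] gK_KK[OF q(1) q(1)] by (simp_all add: N_def omega_K)
  define u0 where "u0 = (s / N) *\<^sub>R q - (t / N) *\<^sub>R K q"
  have "u0 \<in> C" unfolding u0_def using q(1) Kq subspace_C by (intro subspace_diff subspace_scale)
  moreover have "\<omega> q u0 = t" "gK q u0 = s" "gK u0 u0 = (s\<^sup>2 + t\<^sup>2) / N"
    using q(2) q_Kq unfolding u0_def N_def by (simp_all add: power2_eq_square field_simps)
  ultimately have u0: "u0 \<in> C" "\<omega> q u0 = t" "gK q u0 = s" "gK u0 u0 = (s\<^sup>2 + t\<^sup>2) / N"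
    by blast+
  show ?thesis
  proof (cases "s\<^sup>2 + t\<^sup>2 = N")
    case True
    then show ?thesis using u0 q(2) by (intro bexI[of _ u0]) (auto simp: gK_sphere_def N_def)
  next
    case False
    then have "dim C \<ge> 3" using room by (simp add: N_def)
    then obtain w where w: "w \<in> C" "w \<noteq> 0" "gK q w = 0" "gK (K q) w = 0"
      using common_zero_of_two_functionals[OF subspace_C _ linear_gK linear_gK] by blast
    have w_sym: "gK w q = 0" "gK w (K q) = 0" "\<omega> q w = 0" "gK u0 w = 0" "gK w u0 = 0"
      using w gK_sym[OF w(1) q(1)] gK_sym[OF w(1) Kq] gK_K[OF q(1), of w] skew[of q w]
        gK_sym[OF w(1) u0(1)] by (simp_all add: u0_def)
    define r where "r = sqrt ((1 - (s\<^sup>2 + t\<^sup>2) / N) / gK w w)"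
    have "(s\<^sup>2 + t\<^sup>2) / N < 1" using False st q(2) by (simp add: N_def)
    then have "r * r * gK w w = 1 - (s\<^sup>2 + t\<^sup>2) / N"
      using gK_pos[OF w(1,2)] by (simp add: r_def)
    moreover have "u0 + r *\<^sub>R w \<in> C" using u0(1) w(1) subspace_C by (simp add: subspace_add subspace_scale)
    ultimately show ?thesis
      using u0 w w_sym by (intro bexI[of _ "u0 + r *\<^sub>R w"]) (auto simp: gK_sphere_def algebra_simps)
  qed
qed

lemma C_subset_span_K_pair:
  assumes "dim C = 2" "q \<in> C" "q \<noteq> 0"
  shows "C \<subseteq> span {q, K q}"
proof -
  have Kq: "K q \<in> C" using K_C assms(2) .
  have "gK q (K q) = 0" "gK (K q) q = 0" "gK (K q) (K q) = gK q q"
    using gK_self_K[OF assms(2)] gK_sym[OF assms(2) Kq] gK_KK[OF assms(2,2)] by simp_all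
  then have coeffs: "\<alpha> = 0 \<and> \<beta> = 0" if "\<alpha> *\<^sub>R q + \<beta> *\<^sub>R K q = 0" for \<alpha> \<beta>
  proof -
    have "gK (\<alpha> *\<^sub>R q + \<beta> *\<^sub>R K q) q = 0" "gK (\<alpha> *\<^sub>R q + \<beta> *\<^sub>R K q) (K q) = 0"
      using that by simp_all
    then show ?thesis using gK_pos[OF assms(2,3)] \<open>gK (K q) q = 0\<close> \<open>gK q (K q) = 0\<close>
      \<open>gK (K q) (K q) = gK q q\<close> by simp
  qed
  note indep = independent_pairI[of q "K q", OF coeffs]
  then have "card {q, K q} = dim C" using assms(1) by simp
  then show ?thesis using card_eq_dim[of "{q, K q}" C] assms(2) Kq indep by simp
qed

text \<open>q2 and K q2 are g-orthogonal of equal length and \<omega> q1 q2 = g(q1, K q2), so this is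
  Bessel's inequality for them; in dimension 2 they span C.\<close>
lemma gK_bessel:
  assumes q: "q1 \<in> C" "q2 \<in> C"
  shows "(\<omega> q1 q2)\<^sup>2 + (gK q1 q2)\<^sup>2 \<le> gK q1 q1 * gK q2 q2"
    and "dim C = 2 \<Longrightarrow> (\<omega> q1 q2)\<^sup>2 + (gK q1 q2)\<^sup>2 = gK q1 q1 * gK q2 q2"
proof -
  define N where "N = gK q2 q2"
  define g W where "g = gK q1 q2" and "W = \<omega> q1 q2"
  define r where "r = N *\<^sub>R q1 - g *\<^sub>R q2 - W *\<^sub>R K q2"
  have Kq2: "K q2 \<in> C" using K_C q(2) .
  have pairings: "gK q1 (K q2) = \<omega> q1 q2" "gK (K q2) q1 = \<omega> q1 q2" "gK q2 q1 = gK q1 q2"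
    "gK q2 (K q2) = 0" "gK (K q2) q2 = 0" "gK (K q2) (K q2) = N" "gK q2 q2 = N"
    using gK_K[OF q(2)] gK_sym[OF q(1) Kq2] gK_sym[OF q] gK_self_K[OF q(2)] gK_sym[OF q(2) Kq2]
      gK_KK[OF q(2) q(2)] by (simp_all add: N_def)
  have r_C: "r \<in> C" unfolding r_def using q Kq2 subspace_C by (intro subspace_diff subspace_scale)
  have r_orth: "gK r q2 = 0" "gK r (K q2) = 0" unfolding r_def by (simp_all add: pairings g_def W_def)
  have grr: "gK r r = N * (gK q1 q1 * N - (gK q1 q2)\<^sup>2 - (\<omega> q1 q2)\<^sup>2)"
  proof -
    have "gK r r = N * gK r q1 - g * gK r q2 - W * gK r (K q2)" by (subst (2) r_def) simp
    also have "\<dots> = N * gK r q1" using r_orth by simp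
    also have "gK r q1 = N * gK q1 q1 - g * g - W * W"
      unfolding r_def by (simp add: pairings g_def W_def)
    finally show ?thesis by (simp add: g_def W_def power2_eq_square algebra_simps)
  qed
  show ineq: "(\<omega> q1 q2)\<^sup>2 + (gK q1 q2)\<^sup>2 \<le> gK q1 q1 * gK q2 q2"
  proof (cases "q2 = 0")
    case False
    then have "N > 0" using gK_pos q(2) by (simp add: N_def)
    then show ?thesis using gK_nonneg[OF r_C] unfolding grr N_def by (simp add: zero_le_mult_iff)
  qed simp
  assume dim2: "dim C = 2"
  show "(\<omega> q1 q2)\<^sup>2 + (gK q1 q2)\<^sup>2 = gK q1 q1 * gK q2 q2"
  proof (cases "q2 = 0")
    case False
    then have "C \<subseteq> span {q2, K q2}" using C_subset_span_K_pair[OF dim2 q(2)] by blast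
    then obtain \<gamma> \<delta> where r: "r = \<gamma> *\<^sub>R q2 + \<delta> *\<^sub>R K q2" using r_C unfolding span_pair by blast
    have "gK r r = \<gamma> * gK r q2 + \<delta> * gK r (K q2)" by (subst (2) r) simp
    then have "gK r r = 0" using r_orth by simp
    then show ?thesis using grr gK_pos[OF q(2) \<open>q2 \<noteq> 0\<close>] by (simp add: N_def)
  qed simp
qed

text \<open>For x = s e + t f + q with q in C, the plane X through x fails to be antipodal to
  iso_plane u as soon as \<omega> q u = t and g(q, u) = s; such a u on the g-sphere exists when
  the defect g(q, q) - s^2 - t^2 vanishes, or is positive and dim C \<ge> 3.\<close>
definition defect :: "real^'n \<Rightarrow> real^'n \<Rightarrow> real" where
  "defect x y = gK (C_part x) (C_part y) - e_coord x * e_coord y - f_coord x * f_coord y"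

lemma not_antipodal_of_defect:
  assumes x: "x \<in> X" "x \<noteq> 0" and d: "defect x x = 0 \<or> defect x x > 0 \<and> dim C \<ge> 3"
  shows "\<exists>u\<in>gK_sphere. \<not> iso_antipodal \<omega> X (iso_plane u)"
proof -
  let ?q = "C_part x" and ?s = "e_coord x" and ?t = "f_coord x"
  have dq: "defect x x = gK ?q ?q - (?s\<^sup>2 + ?t\<^sup>2)" by (simp add: defect_def power2_eq_square)
  have "?q \<noteq> 0"
  proof
    assume q: "?q = 0"
    have "defect x x \<ge> 0" using d by auto
    with dq q have "?s\<^sup>2 + ?t\<^sup>2 \<le> 0" by simp
    then have "?s\<^sup>2 + ?t\<^sup>2 = 0" by (metis add_nonneg_nonneg zero_le_power2 order_antisym)
    then show False using C_part_eq_0[OF q] x(2) by (simp add: sum_power2_eq_zero_iff)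
  qed
  moreover have "?s\<^sup>2 + ?t\<^sup>2 \<le> gK ?q ?q" "?s\<^sup>2 + ?t\<^sup>2 = gK ?q ?q \<or> dim C \<ge> 3"
    using d dq by auto
  ultimately obtain u where u: "u \<in> gK_sphere" "\<omega> ?q u = ?t" "gK ?q u = ?s"
    using gK_sphere_prescribed_pairings[OF C_part_in_C gK_pos[OF C_part_in_C]] by blast
  then have "\<omega> x (e + u) = 0" "\<omega> x (f + K u) = 0"
    using omega_shifts_coords[of u x] by (simp_all add: gK_sphere_def)
  then have "x \<in> X \<inter> symp_orth \<omega> (iso_plane u)"
    using x(1) by (simp add: iso_plane_def symp_orth_span_pair)
  then show ?thesis using u(1) x(2) unfolding iso_antipodal_def dsum_univ_def by blast
qed

lemma defect_comb:
  "defect (\<alpha> *\<^sub>R x + \<beta> *\<^sub>R y) (\<alpha> *\<^sub>R x + \<beta> *\<^sub>R y)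
    = binary_form (defect x x) (defect x y) (defect y y) \<alpha> \<beta>"
  using gK_sym[OF C_part_in_C C_part_in_C, of y x]
  by (simp add: defect_def binary_form_def algebra_simps power2_eq_square)

lemma isotropic_coord_gram:
  assumes "\<omega> x1 x2 = 0"
  shows "((e_coord x1)\<^sup>2 + (f_coord x1)\<^sup>2) * ((e_coord x2)\<^sup>2 + (f_coord x2)\<^sup>2)
      - (e_coord x1 * e_coord x2 + f_coord x1 * f_coord x2)\<^sup>2 = (\<omega> (C_part x1) (C_part x2))\<^sup>2"
  unfolding omega_C_part_C_part assms by (simp add: algebra_simps power2_eq_square)

lemma defect_not_neg_def:
  assumes "\<omega> x1 x2 = 0"
  shows "\<not> pos_def_binary (- defect x1 x1) (- defect x1 x2) (- defect x2 x2)"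
proof
  define q1 q2 where "q1 = C_part x1" and "q2 = C_part x2"
  have q: "q1 \<in> C" "q2 \<in> C" by (simp_all add: q1_def q2_def C_part_in_C)
  let ?s1 = "e_coord x1" and ?s2 = "e_coord x2" and ?t1 = "f_coord x1" and ?t2 = "f_coord x2"
  have d: "- defect x1 x1 = (?s1\<^sup>2 + ?t1\<^sup>2) - gK q1 q1"
    "- defect x1 x2 = (?s1 * ?s2 + ?t1 * ?t2) - gK q1 q2"
    "- defect x2 x2 = (?s2\<^sup>2 + ?t2\<^sup>2) - gK q2 q2"
    by (simp_all add: defect_def q1_def q2_def power2_eq_square)
  assume "pos_def_binary (- defect x1 x1) (- defect x1 x2) (- defect x2 x2)"
  then have pos: "pos_def_binary ((?s1\<^sup>2 + ?t1\<^sup>2) - gK q1 q1)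
      ((?s1 * ?s2 + ?t1 * ?t2) - gK q1 q2) ((?s2\<^sup>2 + ?t2\<^sup>2) - gK q2 q2)"
    by (simp only: d)
  have "(gK q1 q2)\<^sup>2 \<le> gK q1 q1 * gK q2 q2"
    using gK_bessel(1)[OF q] zero_le_power2[of "\<omega> q1 q2"] by linarith
  then have "gK q1 q1 * gK q2 q2 - (gK q1 q2)\<^sup>2
      < (?s1\<^sup>2 + ?t1\<^sup>2) * (?s2\<^sup>2 + ?t2\<^sup>2) - (?s1 * ?s2 + ?t1 * ?t2)\<^sup>2"
    using det_less_of_pos_def_increment[OF gK_nonneg[OF q(1)] gK_nonneg[OF q(2)] _ pos] by blast
  then show False using gK_bessel(1)[OF q] isotropic_coord_gram[OF assms] by (simp add: q1_def q2_def)
qed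

lemma defect_not_pos_def:
  assumes "\<omega> x1 x2 = 0" "dim C = 2"
  shows "\<not> pos_def_binary (defect x1 x1) (defect x1 x2) (defect x2 x2)"
proof
  define q1 q2 where "q1 = C_part x1" and "q2 = C_part x2"
  have q: "q1 \<in> C" "q2 \<in> C" by (simp_all add: q1_def q2_def C_part_in_C)
  let ?s1 = "e_coord x1" and ?s2 = "e_coord x2" and ?t1 = "f_coord x1" and ?t2 = "f_coord x2"
  have d: "defect x1 x1 = gK q1 q1 - (?s1\<^sup>2 + ?t1\<^sup>2)"
    "defect x1 x2 = gK q1 q2 - (?s1 * ?s2 + ?t1 * ?t2)"
    "defect x2 x2 = gK q2 q2 - (?s2\<^sup>2 + ?t2\<^sup>2)"
    by (simp_all add: defect_def q1_def q2_def power2_eq_square)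
  assume "pos_def_binary (defect x1 x1) (defect x1 x2) (defect x2 x2)"
  then have pos: "pos_def_binary (gK q1 q1 - (?s1\<^sup>2 + ?t1\<^sup>2))
      (gK q1 q2 - (?s1 * ?s2 + ?t1 * ?t2)) (gK q2 q2 - (?s2\<^sup>2 + ?t2\<^sup>2))"
    by (simp only: d)
  have "(?s1 * ?s2 + ?t1 * ?t2)\<^sup>2 \<le> (?s1\<^sup>2 + ?t1\<^sup>2) * (?s2\<^sup>2 + ?t2\<^sup>2)"
    using isotropic_coord_gram[OF assms(1)] zero_le_power2[of "\<omega> (C_part x1) (C_part x2)"] by linarith
  then have "(?s1\<^sup>2 + ?t1\<^sup>2) * (?s2\<^sup>2 + ?t2\<^sup>2) - (?s1 * ?s2 + ?t1 * ?t2)\<^sup>2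
      < gK q1 q1 * gK q2 q2 - (gK q1 q2)\<^sup>2"
    using det_less_of_pos_def_increment[OF _ _ _ pos] by simp
  then show False
    using gK_bessel(2)[OF q assms(2)] isotropic_coord_gram[OF assms(1)] by (simp add: q1_def q2_def)
qed


lemma iso_plane_family_maximal:
  assumes X: "X \<in> iso2 \<omega>" and dim_C: "dim C \<ge> 2"
  shows "\<exists>u\<in>gK_sphere. \<not> iso_antipodal \<omega> X (iso_plane u)"
proof -
  have X: "subspace X" "dim X = 2" "\<And>x y. x \<in> X \<Longrightarrow> y \<in> X \<Longrightarrow> \<omega> x y = 0"
    using X by (auto simp: iso2_def)
  obtain B where B: "B \<subseteq> X" "independent B" "X \<subseteq> span B" "card B = dim X"
    using basis_exists by blast
  then obtain x1 x2 where x12: "B = {x1, x2}" "x1 \<noteq> x2" using X(2) by (auto simp: card_2_iff)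
  have x1: "x1 \<in> X" and x2: "x2 \<in> X" using B(1) x12(1) by auto
  have indep: "\<alpha> = 0 \<and> \<beta> = 0" if "\<alpha> *\<^sub>R x1 + \<beta> *\<^sub>R x2 = 0" for \<alpha> \<beta>
    using independent_pairD[of x1 x2 \<alpha> \<beta>] B(2) x12 that by simp
  have comb_in: "\<alpha> *\<^sub>R x1 + \<beta> *\<^sub>R x2 \<in> X" for \<alpha> \<beta>
    using X(1) x1 x2 by (intro subspace_add subspace_scale)
  have comb_ne: "\<alpha> *\<^sub>R x1 + \<beta> *\<^sub>R x2 \<noteq> 0" if "(\<alpha>, \<beta>) \<noteq> (0, 0)" for \<alpha> \<beta>
    using indep that by blast
  have iso: "\<omega> x1 x2 = 0" using X(3) x1(1) x2 .
  consider (zero) \<alpha> \<beta> where "(\<alpha>, \<beta>) \<noteq> (0, 0)" "binary_form (defect x1 x1) (defect x1 x2) (defect x2 x2) \<alpha> \<beta> = 0"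
    | (pos) "pos_def_binary (defect x1 x1) (defect x1 x2) (defect x2 x2)"
    | (neg) "pos_def_binary (- defect x1 x1) (- defect x1 x2) (- defect x2 x2)"
    by (rule binary_form_cases)
  then show ?thesis
  proof cases
    case zero
    then have "defect (\<alpha> *\<^sub>R x1 + \<beta> *\<^sub>R x2) (\<alpha> *\<^sub>R x1 + \<beta> *\<^sub>R x2) = 0"
      by (simp only: defect_comb)
    then show ?thesis using not_antipodal_of_defect[OF comb_in comb_ne[OF zero(1)]] by blast
  next
    case pos
    then have "binary_form (defect x1 x1) (defect x1 x2) (defect x2 x2) 1 0 > 0"
      unfolding pos_def_binary_def by simp
    then have "defect x1 x1 > 0" by (simp add: binary_form_def)
    moreover have "dim C \<ge> 3" using defect_not_pos_def[OF iso] pos dim_C by fastforce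
    moreover have "x1 \<noteq> 0" using comb_ne[of 1 0] by simp
    ultimately show ?thesis using not_antipodal_of_defect[OF x1] by blast
  next
    case neg
    then show ?thesis using defect_not_neg_def[OF iso] by blast
  qed
qed

definition gK_normalize :: "real^'n \<Rightarrow> real^'n" where
  "gK_normalize w = (1 / sqrt (gK w w)) *\<^sub>R w"

lemma gK_normalize_bij: "bij_betw gK_normalize (sphere 0 1 \<inter> C) gK_sphere"
proof (rule bij_betw_imageI)
  have pos: "gK w w > 0" if "w \<in> sphere 0 1 \<inter> C" for w
    using that gK_pos by fastforce
  show "inj_on gK_normalize (sphere 0 1 \<inter> C)"
  proof (rule inj_onI)
    fix w1 w2 assume w: "w1 \<in> sphere 0 1 \<inter> C" "w2 \<in> sphere 0 1 \<inter> C"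
      and eq: "gK_normalize w1 = gK_normalize w2"
    have norm: "norm (gK_normalize w) = 1 / sqrt (gK w w)" if "w \<in> sphere 0 1 \<inter> C" for w
      using that pos[OF that] by (simp add: gK_normalize_def)
    then have "1 / sqrt (gK w1 w1) = 1 / sqrt (gK w2 w2)" using w eq by metis
    then show "w1 = w2" using eq pos[OF w(2)] unfolding gK_normalize_def by simp
  qed
  show "gK_normalize ` (sphere 0 1 \<inter> C) = gK_sphere"
  proof
    show "gK_normalize ` (sphere 0 1 \<inter> C) \<subseteq> gK_sphere"
    proof
      fix u assume "u \<in> gK_normalize ` (sphere 0 1 \<inter> C)"
      then obtain w where w: "w \<in> sphere 0 1 \<inter> C" "u = gK_normalize w" by blast
      have "gK u u = gK w w / (sqrt (gK w w))\<^sup>2" by (simp add: w(2) gK_normalize_def power2_eq_square)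
      then have "gK u u = 1" using pos[OF w(1)] by simp
      moreover have "u \<in> C" using w subspace_C by (simp add: gK_normalize_def subspace_scale)
      ultimately show "u \<in> gK_sphere" by (simp add: gK_sphere_def)
    qed
    show "gK_sphere \<subseteq> gK_normalize ` (sphere 0 1 \<inter> C)"
    proof
      fix u assume "u \<in> gK_sphere"
      then have u: "u \<in> C" "gK u u = 1" "u \<noteq> 0" by (auto simp: gK_sphere_def)
      define w where "w = (1 / norm u) *\<^sub>R u"
      have "w \<in> sphere 0 1 \<inter> C" using u subspace_C by (simp add: w_def subspace_scale)
      moreover have "sqrt (gK w w) = 1 / norm u" using u by (simp add: w_def real_sqrt_divide)
      then have "gK_normalize w = u" using u by (simp add: gK_normalize_def w_def)
      ultimately show "u \<in> gK_normalize ` (sphere 0 1 \<inter> C)" by blast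
    qed
  qed
qed

lemma continuous_on_gK_normalize: "continuous_on (sphere 0 1 \<inter> C) gK_normalize"
  unfolding gK_normalize_def using gK_pos
  by (intro continuous_intros continuous_on_gK) fastforce

lemma iso_planes_homeomorphic:
  "(proj_mat ` iso_plane ` gK_sphere) homeomorphic (sphere 0 1 \<inter> C)"
proof -
  let ?T = "sphere (0::real^'n) 1 \<inter> C"
  have N: "gK_normalize ` ?T = gK_sphere" "inj_on gK_normalize ?T"
    using gK_normalize_bij by (auto simp: bij_betw_def)
  have in_C: "gK_normalize w \<in> C" if "w \<in> ?T" for w using N(1) that by (auto simp: gK_sphere_def)
  have "continuous_on ?T (\<lambda>w. proj_mat (iso_plane (gK_normalize w)))"
    unfolding iso_plane_def using shifts_independent[OF in_C]
    by (intro continuous_on_proj_mat_span_pair continuous_intros continuous_on_gK_normalize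
        continuous_on_compose2[OF linear_continuous_on[OF linear_conv_bounded_linear[THEN iffD1, OF linear_K]]
          continuous_on_gK_normalize]) auto
  moreover have "inj_on (\<lambda>w. proj_mat (iso_plane (gK_normalize w))) ?T"
  proof (rule inj_onI)
    fix w1 w2 assume w: "w1 \<in> ?T" "w2 \<in> ?T"
      and "proj_mat (iso_plane (gK_normalize w1)) = proj_mat (iso_plane (gK_normalize w2))"
    then have "iso_plane (gK_normalize w1) = iso_plane (gK_normalize w2)"
      by (intro proj_mat_inj) (auto simp: iso_plane_def)
    then show "w1 = w2" using iso_plane_inj N w by (metis imageI inj_onD)
  qed
  moreover have "(\<lambda>w. proj_mat (iso_plane (gK_normalize w))) ` ?T = proj_mat ` iso_plane ` gK_sphere"
    unfolding N(1)[symmetric] image_image ..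
  ultimately have "?T homeomorphic (proj_mat ` iso_plane ` gK_sphere)"
    by (intro homeomorphic_compact compact_Int_closed compact_sphere closed_subspace subspace_C)
  then show ?thesis by (rule homeomorphic_sym[THEN iffD1])
qed

lemma iso_planes_max_antipodal:
  assumes "dim C \<ge> 2"
  shows "max_antipodal (iso2 \<omega>) (iso_antipodal \<omega>) (iso_plane ` gK_sphere)"
  unfolding max_antipodal_def antipodal_set_def
  using iso_plane_in_iso2 iso_plane_antipodal iso_plane_family_maximal[OF _ assms] by blast

end

lemma iso2_max_antipodal_sphere:
  fixes \<omega> :: "real^'n \<Rightarrow> real^'n \<Rightarrow> real"
  assumes \<omega>: "symplectic_form \<omega>" and n: "CARD('n) \<ge> 4"
  shows "\<exists>L. max_antipodal (iso2 \<omega>) (iso_antipodal \<omega>) L \<and>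
    (\<exists>U :: (real^'n) set. subspace U \<and> dim U = CARD('n) - 2 \<and> (proj_mat ` L) homeomorphic (sphere 0 1 \<inter> U))"
proof -
  interpret symplectic \<omega> using \<omega> by unfold_locales
  obtain e f where ef: "\<omega> e f = 1" using symplectic_pair_exists by blast
  obtain K where "compatible_on {z. \<omega> e z = 0 \<and> \<omega> f z = 0} K"
    using compatible_on_exists nondeg_on_symp_orth_pair[OF ef] pair_complement(1)[OF subspace_UNIV UNIV_I UNIV_I ef]
    by auto
  then interpret iso_family \<omega> e f K using ef by unfold_locales
  have "dim C \<ge> 2" using dim_C n by simp
  then show ?thesis
    using iso_planes_homeomorphic subspace_C dim_C
    by (intro exI[of _ "iso_plane ` gK_sphere"] conjI iso_planes_max_antipodal exI[of _ C]) auto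
qed

theorem theorem1p2:
  fixes n :: nat
  assumes "n \<ge> 2" and "CARD('n) = 2 * n"
  shows "(\<exists>L :: ((real^'n) set \<times> (real^'n) set) set.
            max_antipodal flag22 flag_antipodal L \<and>
            (flag_emb ` L) homeomorphic (sphere (0 :: real^3) 1))
       \<and> (\<forall>\<omega> :: real^'n \<Rightarrow> real^'n \<Rightarrow> real. symplectic_form \<omega> \<longrightarrow>
          (\<exists>L :: (real^'n) set set.
            max_antipodal (iso2 \<omega>) (iso_antipodal \<omega>) L \<and>
            (\<exists>U :: (real^'n) set. subspace U \<and> dim U = 2 * n - 2 \<and>
               (proj_mat ` L) homeomorphic (sphere 0 1 \<inter> U))))"
proof -
  have n: "CARD('n) \<ge> 4" "CARD('n) - 2 = 2 * n - 2" using assms by simp_all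
  show ?thesis
    using flag22_max_antipodal_sphere[OF n(1)] iso2_max_antipodal_sphere[OF _ n(1)] n(2) by simp
qed

end
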